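(* Let $\mathbb{A}$ be a Boolean algebra and $(\mathbb{B},\mu)$ a metric Boolean algebra. Define $F_\mu\colon\mathcal{H}(\mathbb{A},\mathbb{B})\to P(St(\mathbb{A}))$ by $F_\mu(\varphi)=\widehat{\mu}\circ f_\varphi^{-1}$. Then $F_\mu$ is continuous in each of the following cases: (1) $\mathcal{H}(\mathbb{A},\mathbb{B})$ carries the uniform topology and $P(St(\mathbb{A}))$ the norm topology; (2) $\mathcal{H}(\mathbb{A},\mathbb{B})$ carries the pointwise metric topology and $P(St(\mathbb{A}))$ the weak* topology.
   Context: A metric Boolean algebra $(\mathbb{B},\mu)$ is a Boolean algebra with a strictly positive finitely additive probability measure $\mu$; $d_\mu(A,B)=\mu(A\triangle B)$ is a metric on $\mathbb{B}$. $\mathcal{H}(\mathbb{A},\mathbb{B})$ is the set of Boolean homomorphisms $\mathbb{A}\to\mathbb{B}$. The pointwise metric topology on it has subbase $\{\psi\colon d_\mu(\varphi(A),\psi(A))<\varepsilon\}$ ($\varphi\in\mathcal{H}(\mathbb{A},\mathbb{B})$, $A\in\mathbb{A}$, $\varepsilon>0$); the uniform topology is induced by $d_{hom}(\varphi,\psi)=\sup_{A\in\mathbb{A}}d_\mu(\varphi(A),\psi(A))$. $St(\cdot)$ is the Stone space; algebras are identified with the clopen algebras of their Stone spaces; $\widehat{\mu}$ is the unique Radon measure on $St(\mathbb{B})$ extending $\mu$; $f_\varphi\colon St(\mathbb{B})\to St(\mathbb{A})$, $f_\varphi(x)=\varphi^{-1}[x]$. $P(K)$ is the space of Radon probability measures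 on a compact space $K$; the norm topology is induced by the variation metric $d_{var}(\mu,\nu)=\sup\{|\mu(A)-\nu(A)|+|\mu(B)-\nu(B)|\colon A,B\text{ disjoint Borel}\}$; the weak* topology is the one induced by $C(K)$ (i.e. $\nu\mapsto\int f\,d\nu$ continuous for all $f\in C(K)$). *)

theory Defs
  imports "HOL-Analysis.Analysis" "HOL-Probability.Probability"
begin

definition bool_hom :: "('a::boolean_algebra \<Rightarrow> 'b::boolean_algebra) \<Rightarrow> bool" where
  "bool_hom \<phi> \<longleftrightarrow>
     (\<forall>x y. \<phi> (inf x y) = inf (\<phi> x) (\<phi> y)) \<and>
     (\<forall>x y. \<phi> (sup x y) = sup (\<phi> x) (\<phi> y)) \<and>
     (\<forall>x. \<phi> (- x) = - \<phi> x) \<and> \<phi> bot = bot \<and> \<phi> top = top"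

definition homs :: "('a::boolean_algebra \<Rightarrow> 'b::boolean_algebra) set" where
  "homs = {\<phi>. bool_hom \<phi>}"

definition metric_ba :: "('b::boolean_algebra \<Rightarrow> real) \<Rightarrow> bool" where
  "metric_ba \<mu> \<longleftrightarrow>
     (\<forall>x. 0 \<le> \<mu> x) \<and> \<mu> top = 1 \<and>
     (\<forall>x y. inf x y = bot \<longrightarrow> \<mu> (sup x y) = \<mu> x + \<mu> y) \<and>
     (\<forall>x. x \<noteq> bot \<longrightarrow> 0 < \<mu> x)"

definition sdiff_ba :: "'b::boolean_algebra \<Rightarrow> 'b \<Rightarrow> 'b" where
  "sdiff_ba x y = sup (x - y) (y - x)"

definition d_mu :: "('b::boolean_algebra \<Rightarrow> real) \<Rightarrow> 'b \<Rightarrow> 'b \<Rightarrow> real" where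
  "d_mu \<mu> x y = \<mu> (sdiff_ba x y)"

definition d_hom :: "('b::boolean_algebra \<Rightarrow> real) \<Rightarrow> ('a::boolean_algebra \<Rightarrow> 'b) \<Rightarrow> ('a \<Rightarrow> 'b) \<Rightarrow> real" where
  "d_hom \<mu> \<phi> \<psi> = (SUP a. d_mu \<mu> (\<phi> a) (\<psi> a))"

definition pointwise_top :: "('b::boolean_algebra \<Rightarrow> real) \<Rightarrow> ('a::boolean_algebra \<Rightarrow> 'b) topology" where
  "pointwise_top \<mu> = topology_generated_by
     {{\<psi> \<in> homs. d_mu \<mu> (\<phi> a) (\<psi> a) < \<epsilon>} | \<phi> a \<epsilon>. \<phi> \<in> homs \<and> \<epsilon> > 0}"

definition uniform_top :: "('b::boolean_algebra \<Rightarrow> real) \<Rightarrow> ('a::boolean_algebra \<Rightarrow> 'b) topology" where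
  "uniform_top \<mu> = topology_generated_by
     {{\<psi> \<in> homs. d_hom \<mu> \<phi> \<psi> < r} | \<phi> r. \<phi> \<in> homs \<and> r > 0}"

text \<open>Points of the Stone space are ultrafilters, represented as sets of elements.\<close>
definition ultrafilter_ba :: "'a::boolean_algebra set \<Rightarrow> bool" where
  "ultrafilter_ba U \<longleftrightarrow>
     bot \<notin> U \<and> top \<in> U \<and>
     (\<forall>x y. x \<in> U \<longrightarrow> x \<le> y \<longrightarrow> y \<in> U) \<and>
     (\<forall>x y. x \<in> U \<longrightarrow> y \<in> U \<longrightarrow> inf x y \<in> U) \<and>
     (\<forall>x. x \<in> U \<or> - x \<in> U)"

definition St :: "'a::boolean_algebra set set" where
  "St = {U. ultrafilter_ba U}"

definition stone_set :: "'a::boolean_algebra \<Rightarrow> 'a set set" where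
  "stone_set a = {U \<in> St. a \<in> U}"

definition stone_top :: "'a::boolean_algebra set topology" where
  "stone_top = topology_generated_by (range stone_set)"

definition f_hom :: "('a::boolean_algebra \<Rightarrow> 'b::boolean_algebra) \<Rightarrow> 'b set \<Rightarrow> 'a set" where
  "f_hom \<phi> x = \<phi> -` x"

definition borel_of :: "'x topology \<Rightarrow> 'x measure" where
  "borel_of K = sigma (topspace K) {U. openin K U}"

definition radon_probs :: "'x topology \<Rightarrow> 'x measure set" where
  "radon_probs K = {\<nu>. sets \<nu> = sets (borel_of K) \<and> space \<nu> = topspace K \<and> prob_space \<nu> \<and>
      (\<forall>E \<in> sets \<nu>. measure \<nu> E = (SUP C \<in> {C. compactin K C \<and> C \<subseteq> E}. measure \<nu> C))}"

definition d_var :: "'x measure \<Rightarrow> 'x measure \<Rightarrow> real" where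
  "d_var \<mu> \<nu> = Sup {\<bar>measure \<mu> A - measure \<nu> A\<bar> + \<bar>measure \<mu> B - measure \<nu> B\<bar> | A B.
        A \<in> sets \<mu> \<and> B \<in> sets \<mu> \<and> A \<inter> B = {}}"

definition norm_top :: "'x topology \<Rightarrow> 'x measure topology" where
  "norm_top K = topology_generated_by
     {{\<nu> \<in> radon_probs K. d_var \<nu>0 \<nu> < r} | \<nu>0 r. \<nu>0 \<in> radon_probs K \<and> r > 0}"

definition weak_star_top :: "'x topology \<Rightarrow> 'x measure topology" where
  "weak_star_top K = topology_generated_by
     {{\<nu> \<in> radon_probs K. \<bar>(\<integral>x. f x \<partial>\<nu>) - c\<bar> < \<epsilon>} | f c \<epsilon>.
        continuous_map K euclideanreal f \<and> \<epsilon> > 0}"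

definition mu_hat :: "('b::boolean_algebra \<Rightarrow> real) \<Rightarrow> 'b set measure" where
  "mu_hat \<mu> = (THE \<nu>. \<nu> \<in> radon_probs stone_top \<and> (\<forall>b. measure \<nu> (stone_set b) = \<mu> b))"

definition F_mu :: "('b::boolean_algebra \<Rightarrow> real) \<Rightarrow> ('a::boolean_algebra \<Rightarrow> 'b) \<Rightarrow> 'a set measure" where
  "F_mu \<mu> \<phi> = distr (mu_hat \<mu>) (borel_of stone_top) (f_hom \<phi>)"

end

theory Submission
  imports Defs
begin

text \<open>
  The Radon extension \<open>mu_hat \<mu>\<close> arises by Caratheodory's construction from the content
  \<open>W \<mapsto> sup {\<mu> b | stone_set b \<subseteq> W}\<close> of open sets; it is unique because, by inner regularity
  and compactness, a Radon measure on the Stone space is determined by its values on clopen sets.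
  Since \<open>f_hom \<phi> -` stone_set a = stone_set (\<phi> a)\<close>, the measures \<open>F_mu \<mu> \<phi>\<close> and \<open>F_mu \<mu> \<psi>\<close>
  differ on \<open>stone_set a\<close> by at most \<open>d_mu \<mu> (\<phi> a) (\<psi> a)\<close>, and the same approximation argument
  extends this bound to all Borel sets; so their variation distance is at most
  \<open>2 * d_hom \<mu> \<phi> \<psi>\<close>, which gives (1). For (2), a continuous function on the Stone space is
  uniformly close to a step function over finitely many clopen sets, so its integral against
  \<open>F_mu \<mu> \<psi>\<close> is controlled by finitely many values \<open>\<mu> (\<psi> b)\<close>.
\<close>

section \<open>Ultrafilters and the Stone space\<close>

definition proper_filter :: "'a::boolean_algebra set \<Rightarrow> bool" where
  "proper_filter F \<longleftrightarrow> top \<in> F \<and> bot \<notin> F \<and>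
     (\<forall>x y. x \<in> F \<longrightarrow> x \<le> y \<longrightarrow> y \<in> F) \<and> (\<forall>x y. x \<in> F \<longrightarrow> y \<in> F \<longrightarrow> inf x y \<in> F)"

lemma proper_filter_Union_chain:
  assumes "C \<noteq> {}" "C \<in> chains {G. proper_filter G}"
  shows "proper_filter (\<Union>C)"
proof -
  have "inf x y \<in> \<Union>C" if xy: "x \<in> \<Union>C" "y \<in> \<Union>C" for x y
  proof -
    obtain G1 G2 where "G1 \<in> C" "x \<in> G1" "G2 \<in> C" "y \<in> G2" using xy by blast
    with assms(2) have "x \<in> G1 \<and> y \<in> G1 \<and> G1 \<in> C \<or> x \<in> G2 \<and> y \<in> G2 \<and> G2 \<in> C"
      unfolding chains_def chain_subset_def by blast
    with assms(2) show ?thesis unfolding chains_def proper_filter_def by blast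
  qed
  with assms show ?thesis unfolding chains_def proper_filter_def by blast
qed

lemma proper_filter_extend:
  fixes M :: "'a::boolean_algebra set"
  assumes M: "proper_filter M" and "- x \<notin> M"
  shows "proper_filter {y. \<exists>m\<in>M. inf m x \<le> y}"
proof -
  from M have top_M: "top \<in> M" and up_M: "\<And>y z. y \<in> M \<Longrightarrow> y \<le> z \<Longrightarrow> z \<in> M"
    and inf_M: "\<And>y z. y \<in> M \<Longrightarrow> z \<in> M \<Longrightarrow> inf y z \<in> M"
    by (simp_all add: proper_filter_def)
  show ?thesis
    unfolding proper_filter_def
  proof (intro conjI allI impI)
    show "top \<in> {y. \<exists>m\<in>M. inf m x \<le> y}" using top_M by auto
    show "bot \<notin> {y. \<exists>m\<in>M. inf m x \<le> y}"
    proof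
      assume "bot \<in> {y. \<exists>m\<in>M. inf m x \<le> y}"
      then obtain m where "m \<in> M" "inf m x \<le> bot" by blast
      then have "m \<le> - x" by (metis bot_unique inf_shunt)
      with \<open>m \<in> M\<close> \<open>- x \<notin> M\<close> up_M show False by blast
    qed
    fix y z
    show "z \<in> {y. \<exists>m\<in>M. inf m x \<le> y}" if "y \<in> {y. \<exists>m\<in>M. inf m x \<le> y}" "y \<le> z"
      using that by (blast intro: order.trans)
    show "inf y z \<in> {y. \<exists>m\<in>M. inf m x \<le> y}"
      if "y \<in> {y. \<exists>m\<in>M. inf m x \<le> y}" "z \<in> {y. \<exists>m\<in>M. inf m x \<le> y}"
    proof -
      from that obtain m1 m2 where m: "m1 \<in> M" "inf m1 x \<le> y" "m2 \<in> M" "inf m2 x \<le> z"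
        by blast
      have "inf (inf m1 m2) x \<le> inf y z"
        using order.trans[OF inf_mono[OF inf_le1 order_refl] m(2)]
          order.trans[OF inf_mono[OF inf_le2 order_refl] m(4)] by simp
      with inf_M[OF m(1,3)] show ?thesis by blast
    qed
  qed
qed

lemma maximal_proper_filter_imp_ultrafilter:
  assumes M: "proper_filter M" and max: "\<And>G. proper_filter G \<Longrightarrow> M \<subseteq> G \<Longrightarrow> G = M"
  shows "ultrafilter_ba M"
proof -
  have "x \<in> M \<or> - x \<in> M" for x
  proof (rule disjCI)
    assume "- x \<notin> M"
    let ?G = "{y. \<exists>m\<in>M. inf m x \<le> y}"
    have "top \<in> M" using M by (simp add: proper_filter_def)
    then have "M \<subseteq> ?G" "x \<in> ?G" using inf_le1 inf_le2 by blast+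
    with max[OF proper_filter_extend[OF M \<open>- x \<notin> M\<close>]] show "x \<in> M" by simp
  qed
  with M show ?thesis by (auto simp: proper_filter_def ultrafilter_ba_def)
qed

lemma proper_filter_imp_ultrafilter:
  fixes F :: "'a::boolean_algebra set"
  assumes "proper_filter F"
  shows "\<exists>U. ultrafilter_ba U \<and> F \<subseteq> U"
proof -
  define A where "A = {G. proper_filter G \<and> F \<subseteq> G}"
  have "\<forall>C\<in>chains A. \<exists>U\<in>A. \<forall>X\<in>C. X \<subseteq> U"
  proof
    fix C assume C: "C \<in> chains A"
    show "\<exists>U\<in>A. \<forall>X\<in>C. X \<subseteq> U"
    proof (cases "C = {}")
      case True
      with assms show ?thesis by (auto simp: A_def)
    next
      case False
      from C have "C \<in> chains {G. proper_filter G}"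
        by (auto simp: A_def chains_def)
      with False have "proper_filter (\<Union>C)" by (rule proper_filter_Union_chain)
      moreover from C False have "F \<subseteq> \<Union>C" by (auto simp: A_def chains_def)
      ultimately have "\<Union>C \<in> A" by (simp add: A_def)
      then show ?thesis by blast
    qed
  qed
  from Zorn_Lemma2[OF this] obtain M where "M \<in> A" and max: "\<forall>X\<in>A. M \<subseteq> X \<longrightarrow> X = M"
    by blast
  from \<open>M \<in> A\<close> have M: "proper_filter M" "F \<subseteq> M" by (simp_all add: A_def)
  have "ultrafilter_ba M"
  proof (rule maximal_proper_filter_imp_ultrafilter[OF M(1)])
    fix G assume "proper_filter G" "M \<subseteq> G"
    with M(2) max show "G = M" by (auto simp: A_def)
  qed
  with M(2) show ?thesis by blast
qed

context
  fixes U :: "'a::boolean_algebra set"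
  assumes U: "ultrafilter_ba U"
begin

lemma ultrafilter_ba_inf_iff: "inf x y \<in> U \<longleftrightarrow> x \<in> U \<and> y \<in> U"
  using U unfolding ultrafilter_ba_def by (meson inf_le1 inf_le2)

lemma ultrafilter_ba_compl_iff: "- x \<in> U \<longleftrightarrow> x \<notin> U"
  using U ultrafilter_ba_inf_iff[of x "- x"] unfolding ultrafilter_ba_def by auto

lemma ultrafilter_ba_sup_iff: "sup x y \<in> U \<longleftrightarrow> x \<in> U \<or> y \<in> U"
  using ultrafilter_ba_compl_iff[of "sup x y"] ultrafilter_ba_inf_iff[of "- x" "- y"]
    ultrafilter_ba_compl_iff by auto

lemma ultrafilter_ba_diff_iff: "x - y \<in> U \<longleftrightarrow> x \<in> U \<and> y \<notin> U"
  by (simp add: diff_eq ultrafilter_ba_inf_iff ultrafilter_ba_compl_iff)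

end

lemma stone_set_subset_St: "stone_set a \<subseteq> St"
  by (auto simp: stone_set_def)

lemma stone_set_inf: "stone_set (inf a b) = stone_set a \<inter> stone_set b"
  by (auto simp: stone_set_def St_def ultrafilter_ba_inf_iff)

lemma stone_set_sup: "stone_set (sup a b) = stone_set a \<union> stone_set b"
  by (auto simp: stone_set_def St_def ultrafilter_ba_sup_iff)

lemma stone_set_compl: "stone_set (- a) = St - stone_set a"
  by (auto simp: stone_set_def St_def ultrafilter_ba_compl_iff)

lemma stone_set_diff: "stone_set (a - b) = stone_set a - stone_set b"
  by (auto simp: stone_set_def St_def ultrafilter_ba_diff_iff)

lemma stone_set_bot: "stone_set bot = {}"
  by (auto simp: stone_set_def St_def ultrafilter_ba_def)

lemma stone_set_top: "stone_set top = St"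
  by (auto simp: stone_set_def St_def ultrafilter_ba_def)

lemma stone_set_mono: "a \<le> b \<Longrightarrow> stone_set a \<subseteq> stone_set b"
  by (auto simp: stone_set_def St_def ultrafilter_ba_def)

lemma stone_set_subset_iff: "stone_set a \<subseteq> stone_set b \<longleftrightarrow> a \<le> b"
proof
  assume sub: "stone_set a \<subseteq> stone_set b"
  show "a \<le> b"
  proof (rule ccontr)
    assume "\<not> a \<le> b"
    then have "proper_filter {y. a - b \<le> y}"
      by (auto simp: proper_filter_def bot_unique intro: order.trans)
    then obtain U where "ultrafilter_ba U" "a - b \<in> U"
      using proper_filter_imp_ultrafilter by blast
    with sub show False by (auto simp: stone_set_def St_def ultrafilter_ba_diff_iff)
  qed
qed (rule stone_set_mono)

lemma stone_set_eq_empty_iff: "stone_set a = {} \<longleftrightarrow> a = bot"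
  using stone_set_subset_iff[of a bot] by (auto simp: stone_set_bot le_bot)

lemma stone_set_Union_finite:
  "finite T \<Longrightarrow> \<exists>a. stone_set a = (\<Union>b\<in>T. stone_set b)"
proof (induction T rule: finite_induct)
  case empty
  then show ?case using stone_set_bot by auto
next
  case (insert b T)
  then obtain a where "stone_set a = (\<Union>b\<in>T. stone_set b)" by blast
  then show ?case by (intro exI[of _ "sup b a"]) (simp add: stone_set_sup)
qed

lemma topspace_stone_top: "topspace (stone_top :: 'a::boolean_algebra set topology) = St"
  using stone_set_subset_St stone_set_top[where 'a='a] by (auto simp: stone_top_def)

lemma openin_stone_set: "openin stone_top (stone_set a)"
  unfolding stone_top_def by (rule topology_generated_by_Basis) simp

lemma closedin_stone_set: "closedin stone_top (stone_set a)"
  using openin_stone_set[of "- a"] stone_set_subset_St[of a]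
  by (simp add: closedin_def topspace_stone_top stone_set_compl)

lemma openin_stone_top_iff:
  "openin (stone_top :: 'a::boolean_algebra set topology) W \<longleftrightarrow>
     W \<subseteq> St \<and> (\<forall>x\<in>W. \<exists>a::'a. x \<in> stone_set a \<and> stone_set a \<subseteq> W)"
proof
  assume W: "openin stone_top W"
  then have "W \<subseteq> St" using openin_subset topspace_stone_top by blast
  moreover from W have "generate_topology_on (range stone_set) W"
    unfolding stone_top_def by (rule openin_topology_generated_by)
  then have "\<forall>x\<in>W. \<exists>a::'a. x \<in> stone_set a \<and> stone_set a \<subseteq> W"
  proof (induction rule: generate_topology_on.induct)
    case (Int V1 V2)
    show ?case
    proof
      fix x assume "x \<in> V1 \<inter> V2"
      with Int.IH obtain a1 a2 where "x \<in> stone_set a1" "stone_set a1 \<subseteq> V1"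
        "x \<in> stone_set a2" "stone_set a2 \<subseteq> V2" by blast
      then show "\<exists>a. x \<in> stone_set a \<and> stone_set a \<subseteq> V1 \<inter> V2"
        by (intro exI[of _ "inf a1 a2"]) (auto simp: stone_set_inf)
    qed
  qed blast+
  ultimately show "W \<subseteq> St \<and> (\<forall>x\<in>W. \<exists>a::'a. x \<in> stone_set a \<and> stone_set a \<subseteq> W)" ..
next
  assume "W \<subseteq> St \<and> (\<forall>x\<in>W. \<exists>a::'a. x \<in> stone_set a \<and> stone_set a \<subseteq> W)"
  then have "W = \<Union> {stone_set a | a::'a. stone_set a \<subseteq> W}" by blast
  moreover have "openin stone_top (\<Union> {stone_set a | a::'a. stone_set a \<subseteq> W})"
    by (rule openin_Union) (auto intro: openin_stone_set)
  ultimately show "openin stone_top W" by simp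
qed

lemma openin_stone_topD:
  "openin (stone_top :: 'a::boolean_algebra set topology) W \<Longrightarrow> x \<in> W \<Longrightarrow>
     \<exists>a::'a. x \<in> stone_set a \<and> stone_set a \<subseteq> W"
  unfolding openin_stone_top_iff by blast

lemma Hausdorff_space_stone_top: "Hausdorff_space (stone_top :: 'a::boolean_algebra set topology)"
  unfolding Hausdorff_space_def topspace_stone_top
proof (intro allI impI)
  fix x y :: "'a set" assume xy: "x \<in> St \<and> y \<in> St \<and> x \<noteq> y"
  then have uf: "ultrafilter_ba x" "ultrafilter_ba y" by (simp_all add: St_def)
  obtain b where "b \<in> x" "b \<notin> y"
  proof (cases "x \<subseteq> y")
    case True
    with xy obtain a where "a \<in> y" "a \<notin> x" by blast
    with that[of "- a"] show thesis by (simp add: ultrafilter_ba_compl_iff[OF uf(1)]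
        ultrafilter_ba_compl_iff[OF uf(2)])
  qed blast
  with xy have "x \<in> stone_set b" "y \<in> stone_set (- b)"
    by (simp_all add: stone_set_def ultrafilter_ba_compl_iff[OF uf(2)])
  moreover have "disjnt (stone_set b) (stone_set (- b))"
    by (auto simp: stone_set_compl disjnt_def)
  ultimately show "\<exists>U V. openin stone_top U \<and> openin stone_top V \<and> x \<in> U \<and> y \<in> V \<and> disjnt U V"
    using openin_stone_set by blast
qed

text \<open>If no finite subfamily of \<open>A\<close> covers \<open>St\<close>, the complements of the finite unions
  generate a proper filter, and an ultrafilter containing it lies in no \<open>stone_set a\<close>, \<open>a \<in> A\<close>.\<close>

lemma stone_set_cover_finite_subcover:
  fixes A :: "'a::boolean_algebra set"
  assumes "St \<subseteq> (\<Union>a\<in>A. stone_set a)"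
  shows "\<exists>T\<subseteq>A. finite T \<and> St \<subseteq> (\<Union>a\<in>T. stone_set a)"
proof (rule ccontr)
  assume no_cover: "\<not> ?thesis"
  define F where "F = {y. \<exists>T\<subseteq>A. finite T \<and> St - (\<Union>a\<in>T. stone_set a) \<subseteq> stone_set y}"
  have "proper_filter F"
    unfolding proper_filter_def
  proof (intro conjI allI impI)
    show "top \<in> F" by (auto simp: F_def stone_set_top)
    show "bot \<notin> F" using no_cover by (auto simp: F_def stone_set_bot)
    fix y z
    show "z \<in> F" if "y \<in> F" "y \<le> z"
      using that stone_set_mono[of y z] unfolding F_def by blast
    show "inf y z \<in> F" if "y \<in> F" "z \<in> F"
    proof -
      from that obtain T1 T2 where "T1 \<subseteq> A" "finite T1" "St - (\<Union>a\<in>T1. stone_set a) \<subseteq> stone_set y"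
        "T2 \<subseteq> A" "finite T2" "St - (\<Union>a\<in>T2. stone_set a) \<subseteq> stone_set z"
        unfolding F_def by blast
      then show ?thesis
        unfolding F_def by (intro CollectI exI[of _ "T1 \<union> T2"]) (auto simp: stone_set_inf)
    qed
  qed
  then obtain U where U: "ultrafilter_ba U" "F \<subseteq> U" using proper_filter_imp_ultrafilter by blast
  then have "U \<in> St" by (simp add: St_def)
  with assms obtain a where "a \<in> A" "a \<in> U" by (auto simp: stone_set_def)
  moreover have "- a \<in> F"
    using \<open>a \<in> A\<close> unfolding F_def by (intro CollectI exI[of _ "{a}"]) (auto simp: stone_set_compl)
  ultimately show False using U ultrafilter_ba_compl_iff[OF U(1), of a] by blast
qed

lemma compact_space_stone_top: "compact_space (stone_top :: 'a::boolean_algebra set topology)"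
  unfolding compact_space_def compactin_def topspace_stone_top
proof (intro conjI allI impI)
  fix \<U> :: "'a set set set"
  assume \<U>: "(\<forall>U\<in>\<U>. openin stone_top U) \<and> St \<subseteq> \<Union>\<U>"
  define A where "A = {a::'a. \<exists>U\<in>\<U>. stone_set a \<subseteq> U}"
  have "St \<subseteq> (\<Union>a\<in>A. stone_set a)"
  proof
    fix x :: "'a set" assume "x \<in> St"
    with \<U> obtain U where "U \<in> \<U>" "x \<in> U" by blast
    moreover from \<U> \<open>U \<in> \<U>\<close> have "openin stone_top U" by blast
    ultimately obtain a where "x \<in> stone_set a" "stone_set a \<subseteq> U"
      using openin_stone_topD by blast
    with \<open>U \<in> \<U>\<close> have "a \<in> A" by (auto simp: A_def)
    with \<open>x \<in> stone_set a\<close> show "x \<in> (\<Union>a\<in>A. stone_set a)" by blast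
  qed
  from stone_set_cover_finite_subcover[OF this]
  obtain T where T: "T \<subseteq> A" "finite T" "St \<subseteq> (\<Union>a\<in>T. stone_set a)"
    by blast
  then have "\<forall>a\<in>T. \<exists>U. U \<in> \<U> \<and> stone_set a \<subseteq> U" unfolding A_def by blast
  then obtain V where V: "\<forall>a\<in>T. V a \<in> \<U> \<and> stone_set a \<subseteq> V a"
    by (rule bchoice[THEN exE])
  show "\<exists>\<F>. finite \<F> \<and> \<F> \<subseteq> \<U> \<and> St \<subseteq> \<Union>\<F>"
  proof (intro exI conjI)
    show "finite (V ` T)" "V ` T \<subseteq> \<U>" using T(2) V by auto
    show "St \<subseteq> \<Union> (V ` T)" using T(3) V by blast
  qed
qed simp

lemma compactin_stone_set: "compactin stone_top (stone_set a)"
  by (rule closedin_compact_space[OF compact_space_stone_top closedin_stone_set])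

lemma stone_set_between:
  fixes C :: "'a::boolean_algebra set set"
  assumes "compactin stone_top C" "openin stone_top W" "C \<subseteq> W"
  shows "\<exists>a::'a. C \<subseteq> stone_set a \<and> stone_set a \<subseteq> W"
proof -
  let ?B = "stone_set ` {a::'a. stone_set a \<subseteq> W}"
  have "C \<subseteq> \<Union>?B"
  proof
    fix x assume "x \<in> C"
    with assms(2,3) obtain a where "x \<in> stone_set a" "stone_set a \<subseteq> W"
      using openin_stone_topD by blast
    then show "x \<in> \<Union>?B" by blast
  qed
  moreover have "\<forall>U\<in>?B. openin stone_top U"
    by (simp add: openin_stone_set)
  ultimately obtain \<F> where "finite \<F>" "\<F> \<subseteq> ?B" "C \<subseteq> \<Union>\<F>"
    using assms(1)[unfolded compactin_def, THEN conjunct2, rule_format, of ?B] by blast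
  moreover obtain T where "T \<subseteq> {a. stone_set a \<subseteq> W}" "finite T" "\<F> = stone_set ` T"
    using finite_subset_image[OF \<open>finite \<F>\<close> \<open>\<F> \<subseteq> ?B\<close>] by blast
  moreover obtain a where "stone_set a = (\<Union>b\<in>T. stone_set b)"
    using stone_set_Union_finite[OF \<open>finite T\<close>] by blast
  ultimately have "C \<subseteq> stone_set a" "stone_set a \<subseteq> W" by auto
  then show ?thesis by blast
qed

context
  fixes \<phi> :: "'a::boolean_algebra \<Rightarrow> 'b::boolean_algebra"
  assumes \<phi>: "bool_hom \<phi>"
begin

lemma f_hom_in_St: "U \<in> St \<Longrightarrow> f_hom \<phi> U \<in> St"
proof -
  assume "U \<in> St"
  then have U: "ultrafilter_ba U" by (simp add: St_def)
  have hom: "\<phi> (inf x y) = inf (\<phi> x) (\<phi> y)" "\<phi> (- x) = - \<phi> x" "\<phi> bot = bot" "\<phi> top = top"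
    for x y using \<phi> by (simp_all add: bool_hom_def)
  have mono: "\<phi> x \<le> \<phi> y" if "x \<le> y" for x y
    using hom(1)[of x y] that by (metis inf.absorb_iff1)
  show ?thesis
    unfolding St_def f_hom_def mem_Collect_eq ultrafilter_ba_def vimage_eq
  proof (intro conjI allI impI)
    show "\<phi> bot \<notin> U" "\<phi> top \<in> U" using U by (simp_all add: hom ultrafilter_ba_def)
    fix x y
    show "\<phi> y \<in> U" if "\<phi> x \<in> U" "x \<le> y"
      using U that mono unfolding ultrafilter_ba_def by blast
    show "\<phi> (inf x y) \<in> U" if "\<phi> x \<in> U" "\<phi> y \<in> U"
      using that by (simp add: hom ultrafilter_ba_inf_iff[OF U])
    show "\<phi> x \<in> U \<or> \<phi> (- x) \<in> U"
      by (simp add: hom ultrafilter_ba_compl_iff[OF U])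
  qed
qed

lemma f_hom_preimage_stone_set: "f_hom \<phi> -` stone_set a \<inter> St = stone_set (\<phi> a)"
  using f_hom_in_St by (auto simp: stone_set_def f_hom_def)

lemma continuous_map_f_hom:
  "continuous_map (stone_top :: 'b set topology) (stone_top :: 'a set topology) (f_hom \<phi>)"
proof -
  have "continuous_map stone_top (topology_generated_by (range (stone_set :: 'a \<Rightarrow> _))) (f_hom \<phi>)"
  proof (rule continuous_on_generated_topo)
    fix V assume "V \<in> range (stone_set :: 'a \<Rightarrow> _)"
    then show "openin stone_top (f_hom \<phi> -` V \<inter> topspace stone_top)"
      by (auto simp: topspace_stone_top f_hom_preimage_stone_set openin_stone_set)
  next
    show "f_hom \<phi> ` topspace stone_top \<subseteq> \<Union> (range (stone_set :: 'a \<Rightarrow> _))"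
      using f_hom_in_St stone_set_top by (auto simp: topspace_stone_top)
  qed
  then show ?thesis by (simp add: stone_top_def)
qed

end

section \<open>Borel sets and Radon probability measures\<close>

lemma space_borel_of: "space (borel_of K) = topspace K"
  and sets_borel_of: "sets (borel_of K) = sigma_sets (topspace K) {U. openin K U}"
  using openin_subset[of K] unfolding borel_of_def
  by (auto simp: space_measure_of_conv sets_measure_of_conv)

lemma borel_of_open: "openin K U \<Longrightarrow> U \<in> sets (borel_of K)"
  by (simp add: sets_borel_of)

lemma borel_of_closed: "closedin K C \<Longrightarrow> C \<in> sets (borel_of K)"
  unfolding closedin_def using borel_of_open[of K "topspace K - C"]
  by (metis double_diff order_refl sets.compl_sets space_borel_of)

lemma borel_of_euclidean: "borel_of euclidean = borel"
  by (simp add: borel_of_def borel_def)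

lemma measurable_borel_of_continuous_map:
  assumes "continuous_map X Y f"
  shows "f \<in> borel_of X \<rightarrow>\<^sub>M borel_of Y"
  unfolding borel_of_def[of Y]
proof (rule measurable_measure_of)
  show "{U. openin Y U} \<subseteq> Pow (topspace Y)" using openin_subset by blast
  show "f \<in> space (borel_of X) \<rightarrow> topspace Y"
    using assms by (simp add: space_borel_of continuous_map_def)
  fix U assume "U \<in> {U. openin Y U}"
  then have "openin X {x \<in> topspace X. f x \<in> U}"
    using assms openin_continuous_map_preimage by blast
  moreover have "f -` U \<inter> space (borel_of X) = {x \<in> topspace X. f x \<in> U}"
    by (auto simp: space_borel_of)
  ultimately show "f -` U \<inter> space (borel_of X) \<in> sets (borel_of X)"
    by (simp add: borel_of_open)
qed

context
  fixes \<nu> :: "'x measure" and K :: "'x topology"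
  assumes \<nu>: "\<nu> \<in> radon_probs K"
begin

lemma radon_probs_sets: "sets \<nu> = sets (borel_of K)"
  and radon_probs_space: "space \<nu> = topspace K"
  and radon_probs_prob_space: "prob_space \<nu>"
  using \<nu> unfolding radon_probs_def by blast+

lemma radon_probs_measure_mono: "A \<subseteq> B \<Longrightarrow> B \<in> sets (borel_of K) \<Longrightarrow> measure \<nu> A \<le> measure \<nu> B"
  using radon_probs_prob_space radon_probs_sets
  by (auto intro: finite_measure.finite_measure_mono simp: prob_space_def)

lemma radon_probs_inner_compact:
  assumes "E \<in> sets \<nu>" "e > 0"
  shows "\<exists>C. compactin K C \<and> C \<subseteq> E \<and> measure \<nu> E - e < measure \<nu> C"
proof -
  let ?S = "{C. compactin K C \<and> C \<subseteq> E}"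
  have "{} \<in> ?S" by simp
  then have ne: "?S \<noteq> {}" by blast
  have bdd: "bdd_above (measure \<nu> ` ?S)"
    using prob_space.prob_le_1[OF radon_probs_prob_space] by (intro bdd_aboveI[of _ 1]) auto
  have "measure \<nu> E = (SUP C \<in> ?S. measure \<nu> C)"
    using \<nu> assms(1) unfolding radon_probs_def by blast
  with assms(2) have "measure \<nu> E - e < (SUP C \<in> ?S. measure \<nu> C)" by linarith
  then show ?thesis unfolding less_cSUP_iff[OF ne bdd] by blast
qed

end

lemma radon_probsI:
  assumes "sets \<nu> = sets (borel_of K)" "space \<nu> = topspace K" "prob_space \<nu>"
    and inner: "\<And>E e. E \<in> sets \<nu> \<Longrightarrow> e > 0 \<Longrightarrow>
                  \<exists>C. compactin K C \<and> C \<subseteq> E \<and> measure \<nu> E - e \<le> measure \<nu> C"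
  shows "\<nu> \<in> radon_probs K"
proof -
  have "measure \<nu> E = (SUP C \<in> {C. compactin K C \<and> C \<subseteq> E}. measure \<nu> C)"
    if E: "E \<in> sets \<nu>" for E
  proof -
    let ?S = "{C. compactin K C \<and> C \<subseteq> E}"
    have "{} \<in> ?S" by simp
    then have ne: "?S \<noteq> {}" by blast
    have bdd: "bdd_above (measure \<nu> ` ?S)"
      using prob_space.prob_le_1[OF assms(3)] by (intro bdd_aboveI[of _ 1]) auto
    show ?thesis
    proof (rule antisym)
      show "measure \<nu> E \<le> (SUP C \<in> ?S. measure \<nu> C)"
      proof (rule field_le_epsilon)
        fix e :: real assume "0 < e"
        with inner[OF E] obtain C where "C \<in> ?S" "measure \<nu> E - e \<le> measure \<nu> C" by blast
        with cSUP_upper[OF _ bdd] show "measure \<nu> E \<le> (SUP C \<in> ?S. measure \<nu> C) + e"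
          by fastforce
      qed
      show "(SUP C \<in> ?S. measure \<nu> C) \<le> measure \<nu> E"
        using ne E assms(3) by (intro cSUP_least) (auto intro: finite_measure.finite_measure_mono
            simp: prob_space_def)
    qed
  qed
  with assms(1-3) show ?thesis unfolding radon_probs_def by blast
qed

text \<open>Hausdorffness of \<open>Y\<close> makes the compact image \<open>f ` D\<close> of an inner approximation \<open>D\<close>
  of \<open>f -` E\<close> measurable.\<close>

lemma radon_probs_distr:
  assumes \<nu>: "\<nu> \<in> radon_probs X" and f: "continuous_map X Y f" and Y: "Hausdorff_space Y"
  shows "distr \<nu> (borel_of Y) f \<in> radon_probs Y"
proof (rule radon_probsI)
  have meas: "f \<in> \<nu> \<rightarrow>\<^sub>M borel_of Y"
    using measurable_borel_of_continuous_map[OF f] measurable_cong_sets[OF radon_probs_sets[OF \<nu>] refl]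
    by blast
  then show "prob_space (distr \<nu> (borel_of Y) f)"
    by (rule prob_space.prob_space_distr[OF radon_probs_prob_space[OF \<nu>]])
  show "sets (distr \<nu> (borel_of Y) f) = sets (borel_of Y)"
    and "space (distr \<nu> (borel_of Y) f) = topspace Y"
    by (simp_all add: space_borel_of)
  fix E e assume "E \<in> sets (distr \<nu> (borel_of Y) f)" "(e::real) > 0"
  then have E: "E \<in> sets (borel_of Y)" by simp
  have pre: "f -` E \<inter> space \<nu> \<in> sets \<nu>" using measurable_sets[OF meas E] .
  obtain D where D: "compactin X D" "D \<subseteq> f -` E \<inter> space \<nu>"
    "measure \<nu> (f -` E \<inter> space \<nu>) - e < measure \<nu> D"
    using radon_probs_inner_compact[OF \<nu> pre \<open>e > 0\<close>] by blast
  have C: "compactin Y (f ` D)" by (rule image_compactin[OF D(1) f])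
  then have CB: "f ` D \<in> sets (borel_of Y)"
    by (intro borel_of_closed compactin_imp_closedin[OF Y])
  have "measure \<nu> D \<le> measure \<nu> (f -` (f ` D) \<inter> space \<nu>)"
    using D(2) measurable_sets[OF meas CB]
    by (intro finite_measure.finite_measure_mono prob_space.axioms(1)[OF radon_probs_prob_space[OF \<nu>]])
      auto
  with D(3) have "measure (distr \<nu> (borel_of Y) f) E - e \<le> measure (distr \<nu> (borel_of Y) f) (f ` D)"
    by (simp add: measure_distr[OF meas E] measure_distr[OF meas CB])
  moreover have "f ` D \<subseteq> E" using D(2) by blast
  ultimately show "\<exists>C. compactin Y C \<and> C \<subseteq> E \<and>
      measure (distr \<nu> (borel_of Y) f) E - e \<le> measure (distr \<nu> (borel_of Y) f) C"
    using C by blast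
qed

section \<open>Radon probability measures on the Stone space\<close>

lemma stone_set_in_borel: "stone_set a \<in> sets (borel_of stone_top)"
  by (rule borel_of_open[OF openin_stone_set])

lemma stone_radon_outer_clopen:
  fixes \<nu> :: "'a::boolean_algebra set measure"
  assumes \<nu>: "\<nu> \<in> radon_probs stone_top" and C: "compactin stone_top C" and "e > 0"
  shows "\<exists>a::'a. C \<subseteq> stone_set a \<and> measure \<nu> (stone_set a) < measure \<nu> C + e"
proof -
  have open_compl: "openin stone_top (St - D)" if "compactin stone_top D" for D :: "'a set set"
    using compactin_imp_closedin[OF Hausdorff_space_stone_top that]
    by (simp add: closedin_def topspace_stone_top)
  have sets: "D \<in> sets \<nu> \<Longrightarrow> St - D \<in> sets \<nu>" for D
    using sets.compl_sets[of D \<nu>] by (simp add: radon_probs_space[OF \<nu>] topspace_stone_top)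
  have CB: "C \<in> sets \<nu>"
    using borel_of_closed compactin_imp_closedin[OF Hausdorff_space_stone_top C]
    by (simp add: radon_probs_sets[OF \<nu>])
  obtain D where D: "compactin stone_top D" "D \<subseteq> St - C" "measure \<nu> (St - C) - e < measure \<nu> D"
    using radon_probs_inner_compact[OF \<nu> sets[OF CB] \<open>e > 0\<close>] by blast
  have DB: "D \<in> sets \<nu>"
    using borel_of_closed compactin_imp_closedin[OF Hausdorff_space_stone_top D(1)]
    by (simp add: radon_probs_sets[OF \<nu>])
  have "C \<subseteq> St - D"
    using D(2) compactin_subset_topspace[OF C] by (auto simp: topspace_stone_top)
  then obtain a where a: "C \<subseteq> stone_set a" "stone_set a \<subseteq> St - D"
    using stone_set_between[OF C open_compl[OF D(1)]] by blast
  have "measure \<nu> (stone_set a) \<le> measure \<nu> (St - D)"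
    using a(2) sets[OF DB] by (intro radon_probs_measure_mono[OF \<nu>]) (simp_all add: radon_probs_sets[OF \<nu>])
  also have "\<dots> = 1 - measure \<nu> D"
    using prob_space.prob_compl[OF radon_probs_prob_space[OF \<nu>] DB]
    by (simp add: radon_probs_space[OF \<nu>] topspace_stone_top)
  also have "\<dots> < measure \<nu> C + e"
    using D(3) prob_space.prob_compl[OF radon_probs_prob_space[OF \<nu>] CB]
    by (simp add: radon_probs_space[OF \<nu>] topspace_stone_top)
  finally show ?thesis using a(1) by blast
qed

text \<open>Approximate \<open>E\<close> from inside by a compact set and then that from outside by a clopen set,
  simultaneously for both measures.\<close>

lemma stone_radon_clopen_approx:
  fixes \<nu>1 \<nu>2 :: "'a::boolean_algebra set measure"
  assumes \<nu>: "\<nu>1 \<in> radon_probs stone_top" "\<nu>2 \<in> radon_probs stone_top"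
    and E: "E \<in> sets (borel_of stone_top)" and e: "e > 0"
  shows "\<exists>a::'a. \<bar>measure \<nu>1 E - measure \<nu>1 (stone_set a)\<bar> < e \<and>
                \<bar>measure \<nu>2 E - measure \<nu>2 (stone_set a)\<bar> < e"
proof -
  obtain C1 where C1: "compactin stone_top C1" "C1 \<subseteq> E" "measure \<nu>1 E - e < measure \<nu>1 C1"
    using radon_probs_inner_compact[OF \<nu>(1) _ e] E radon_probs_sets[OF \<nu>(1)] by blast
  obtain C2 where C2: "compactin stone_top C2" "C2 \<subseteq> E" "measure \<nu>2 E - e < measure \<nu>2 C2"
    using radon_probs_inner_compact[OF \<nu>(2) _ e] E radon_probs_sets[OF \<nu>(2)] by blast
  define C where "C = C1 \<union> C2"
  have C: "compactin stone_top C" "C \<subseteq> E" using C1 C2 by (auto simp: C_def compactin_Un)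
  have CB: "C \<in> sets (borel_of stone_top)"
    by (rule borel_of_closed[OF compactin_imp_closedin[OF Hausdorff_space_stone_top C(1)]])
  obtain a1 where a1: "C \<subseteq> stone_set a1" "measure \<nu>1 (stone_set a1) < measure \<nu>1 C + e"
    using stone_radon_outer_clopen[OF \<nu>(1) C(1) e] by blast
  obtain a2 where a2: "C \<subseteq> stone_set a2" "measure \<nu>2 (stone_set a2) < measure \<nu>2 C + e"
    using stone_radon_outer_clopen[OF \<nu>(2) C(1) e] by blast
  have "C \<subseteq> stone_set (inf a1 a2)" using a1 a2 by (simp add: stone_set_inf)
  have close: "\<bar>measure \<nu> E - measure \<nu> (stone_set (inf a1 a2))\<bar> < e"
    if "\<nu> \<in> radon_probs stone_top" "measure \<nu> E - e < measure \<nu> C"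
      "measure \<nu> (stone_set a') < measure \<nu> C + e" "inf a1 a2 \<le> a'"
    for \<nu> :: "'a set measure" and a'
  proof -
    note mono = radon_probs_measure_mono[OF that(1)]
    have "measure \<nu> C \<le> measure \<nu> (stone_set (inf a1 a2))" "measure \<nu> C \<le> measure \<nu> E"
      "measure \<nu> (stone_set (inf a1 a2)) \<le> measure \<nu> (stone_set a')"
      using mono[OF \<open>C \<subseteq> stone_set (inf a1 a2)\<close> stone_set_in_borel] mono[OF C(2) E]
        mono[OF stone_set_mono[OF that(4)] stone_set_in_borel] by simp_all
    with that(2,3) show ?thesis by linarith
  qed
  have "measure \<nu>1 C1 \<le> measure \<nu>1 C" "measure \<nu>2 C2 \<le> measure \<nu>2 C"
    using radon_probs_measure_mono[OF \<nu>(1) _ CB, of C1] radon_probs_measure_mono[OF \<nu>(2) _ CB, of C2]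
    by (simp_all add: C_def)
  with C1(3) C2(3) have "measure \<nu>1 E - e < measure \<nu>1 C" "measure \<nu>2 E - e < measure \<nu>2 C"
    by linarith+
  with close[OF \<nu>(1) _ a1(2) inf_le1] close[OF \<nu>(2) _ a2(2) inf_le2] show ?thesis by blast
qed

lemma stone_radon_measure_diff_le:
  fixes \<nu>1 \<nu>2 :: "'a::boolean_algebra set measure"
  assumes \<nu>: "\<nu>1 \<in> radon_probs stone_top" "\<nu>2 \<in> radon_probs stone_top"
    and d: "\<And>a::'a. \<bar>measure \<nu>1 (stone_set a) - measure \<nu>2 (stone_set a)\<bar> \<le> d"
    and E: "E \<in> sets (borel_of stone_top)"
  shows "\<bar>measure \<nu>1 E - measure \<nu>2 E\<bar> \<le> d"
proof (rule field_le_epsilon)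
  fix e :: real assume "0 < e"
  then obtain a :: 'a where "\<bar>measure \<nu>1 E - measure \<nu>1 (stone_set a)\<bar> < e / 2"
      "\<bar>measure \<nu>2 E - measure \<nu>2 (stone_set a)\<bar> < e / 2"
    using stone_radon_clopen_approx[OF \<nu> E, of "e / 2"] by auto
  with d[of a] show "\<bar>measure \<nu>1 E - measure \<nu>2 E\<bar> \<le> d + e" by linarith
qed

lemma stone_radon_eqI:
  fixes \<nu>1 \<nu>2 :: "'a::boolean_algebra set measure"
  assumes \<nu>: "\<nu>1 \<in> radon_probs stone_top" "\<nu>2 \<in> radon_probs stone_top"
    and eq: "\<And>a::'a. measure \<nu>1 (stone_set a) = measure \<nu>2 (stone_set a)"
  shows "\<nu>1 = \<nu>2"
proof (rule measure_eqI)
  show sets: "sets \<nu>1 = sets \<nu>2" by (simp add: radon_probs_sets[OF \<nu>(1)] radon_probs_sets[OF \<nu>(2)])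
  fix E assume "E \<in> sets \<nu>1"
  then have "E \<in> sets (borel_of stone_top)" by (simp add: radon_probs_sets[OF \<nu>(1)])
  from stone_radon_measure_diff_le[OF \<nu> _ this, where d = 0] eq
  have "measure \<nu>1 E = measure \<nu>2 E" by simp
  then show "emeasure \<nu>1 E = emeasure \<nu>2 E"
    by (simp add: finite_measure.emeasure_eq_measure[OF prob_space.axioms(1), OF radon_probs_prob_space[OF \<nu>(1)]]
        finite_measure.emeasure_eq_measure[OF prob_space.axioms(1), OF radon_probs_prob_space[OF \<nu>(2)]])
qed

lemma continuous_map_generated_by_locally:
  assumes "f ` topspace X \<subseteq> \<Union>S"
    and "\<And>V x. V \<in> S \<Longrightarrow> x \<in> topspace X \<Longrightarrow> f x \<in> V \<Longrightarrow>
           \<exists>T. openin X T \<and> x \<in> T \<and> (\<forall>y\<in>T. f y \<in> V)"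
  shows "continuous_map X (topology_generated_by S) f"
proof (rule continuous_on_generated_topo)
  fix V assume "V \<in> S"
  show "openin X (f -` V \<inter> topspace X)"
  proof (subst openin_subopen, intro ballI)
    fix x assume "x \<in> f -` V \<inter> topspace X"
    with assms(2)[OF \<open>V \<in> S\<close>] obtain T where "openin X T" "x \<in> T" "\<forall>y\<in>T. f y \<in> V" by blast
    moreover from \<open>openin X T\<close> have "T \<subseteq> topspace X" by (rule openin_subset)
    ultimately show "\<exists>T. openin X T \<and> x \<in> T \<and> T \<subseteq> f -` V \<inter> topspace X" by blast
  qed
qed (rule assms(1))

lemma d_var_le:
  assumes "\<And>A B. A \<in> sets \<nu>1 \<Longrightarrow> B \<in> sets \<nu>1 \<Longrightarrow> A \<inter> B = {} \<Longrightarrow>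
      \<bar>measure \<nu>1 A - measure \<nu>2 A\<bar> + \<bar>measure \<nu>1 B - measure \<nu>2 B\<bar> \<le> c"
  shows "d_var \<nu>1 \<nu>2 \<le> c"
  unfolding d_var_def
proof (rule cSup_least)
  have "{} \<in> sets \<nu>1" by simp
  then show "{\<bar>measure \<nu>1 A - measure \<nu>2 A\<bar> + \<bar>measure \<nu>1 B - measure \<nu>2 B\<bar> | A B.
      A \<in> sets \<nu>1 \<and> B \<in> sets \<nu>1 \<and> A \<inter> B = {}} \<noteq> {}" by blast
qed (use assms in blast)

lemma d_var_ge:
  assumes "prob_space \<nu>1" "prob_space \<nu>2" "A \<in> sets \<nu>1" "B \<in> sets \<nu>1" "A \<inter> B = {}"
  shows "\<bar>measure \<nu>1 A - measure \<nu>2 A\<bar> + \<bar>measure \<nu>1 B - measure \<nu>2 B\<bar> \<le> d_var \<nu>1 \<nu>2"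
  unfolding d_var_def
proof (rule cSup_upper)
  have "\<bar>measure \<nu>1 A' - measure \<nu>2 A'\<bar> + \<bar>measure \<nu>1 B' - measure \<nu>2 B'\<bar> \<le> 2" for A' B'
    using prob_space.prob_le_1[OF assms(1), of A'] prob_space.prob_le_1[OF assms(2), of A']
      prob_space.prob_le_1[OF assms(1), of B'] prob_space.prob_le_1[OF assms(2), of B']
      measure_nonneg[of \<nu>1 A'] measure_nonneg[of \<nu>2 A'] measure_nonneg[of \<nu>1 B'] measure_nonneg[of \<nu>2 B']
    by linarith
  then show "bdd_above {\<bar>measure \<nu>1 A - measure \<nu>2 A\<bar> + \<bar>measure \<nu>1 B - measure \<nu>2 B\<bar> | A B.
      A \<in> sets \<nu>1 \<and> B \<in> sets \<nu>1 \<and> A \<inter> B = {}}"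
    by (intro bdd_aboveI[of _ 2]) blast
qed (use assms in blast)

lemma d_var_self: "d_var \<nu> \<nu> = 0"
proof -
  have "{} \<in> sets \<nu>" by simp
  then have "{\<bar>measure \<nu> A - measure \<nu> A\<bar> + \<bar>measure \<nu> B - measure \<nu> B\<bar> | A B.
      A \<in> sets \<nu> \<and> B \<in> sets \<nu> \<and> A \<inter> B = {}} = {0}" by auto
  then show ?thesis by (simp add: d_var_def)
qed

lemma topspace_norm_top: "topspace (norm_top K) = radon_probs K"
  unfolding norm_top_def topology_generated_by_topspace
proof (intro antisym subsetI)
  fix \<nu> assume "\<nu> \<in> radon_probs K"
  then have "{\<nu>' \<in> radon_probs K. d_var \<nu> \<nu>' < 1} \<in>
      {{\<nu>' \<in> radon_probs K. d_var \<nu>0 \<nu>' < r} | \<nu>0 r. \<nu>0 \<in> radon_probs K \<and> r > 0}"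
    by (intro CollectI exI[of _ \<nu>] exI[of _ "1::real"]) simp
  moreover have "\<nu> \<in> {\<nu>' \<in> radon_probs K. d_var \<nu> \<nu>' < 1}"
    using \<open>\<nu> \<in> radon_probs K\<close> by (simp add: d_var_self)
  ultimately show "\<nu> \<in> \<Union> {{\<nu>' \<in> radon_probs K. d_var \<nu>0 \<nu>' < r} | \<nu>0 r. \<nu>0 \<in> radon_probs K \<and> r > 0}"
    by (rule UnionI)
qed auto

lemma topspace_weak_star_top: "topspace (weak_star_top K) = radon_probs K"
  unfolding weak_star_top_def topology_generated_by_topspace
proof (intro antisym subsetI)
  fix \<nu> assume "\<nu> \<in> radon_probs K"
  have "{\<nu>' \<in> radon_probs K. \<bar>(\<integral>x. 0 \<partial>\<nu>') - 0\<bar> < (1::real)} \<in>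
      {{\<nu>' \<in> radon_probs K. \<bar>(\<integral>x. f x \<partial>\<nu>') - c\<bar> < \<epsilon>} | f c \<epsilon>.
        continuous_map K euclideanreal f \<and> \<epsilon> > 0}"
    by (rule CollectI, rule exI[of _ "\<lambda>_. 0"], rule exI[of _ 0], rule exI[of _ 1]) simp
  moreover have "\<nu> \<in> {\<nu>' \<in> radon_probs K. \<bar>(\<integral>x. 0 \<partial>\<nu>') - 0\<bar> < (1::real)}"
    using \<open>\<nu> \<in> radon_probs K\<close> by simp
  ultimately show "\<nu> \<in> \<Union> {{\<nu>' \<in> radon_probs K. \<bar>(\<integral>x. f x \<partial>\<nu>') - c\<bar> < \<epsilon>} | f c \<epsilon>.
      continuous_map K euclideanreal f \<and> \<epsilon> > 0}"
    by (rule UnionI)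
qed auto

lemma d_var_triangle:
  assumes "prob_space \<nu>0" "prob_space \<nu>1" "prob_space \<nu>2" "sets \<nu>0 = sets \<nu>1"
  shows "d_var \<nu>0 \<nu>2 \<le> d_var \<nu>0 \<nu>1 + d_var \<nu>1 \<nu>2"
proof (rule d_var_le)
  fix A B assume AB: "A \<in> sets \<nu>0" "B \<in> sets \<nu>0" "A \<inter> B = {}"
  have "\<bar>measure \<nu>0 A - measure \<nu>1 A\<bar> + \<bar>measure \<nu>0 B - measure \<nu>1 B\<bar> \<le> d_var \<nu>0 \<nu>1"
    using AB assms by (intro d_var_ge) auto
  moreover have "\<bar>measure \<nu>1 A - measure \<nu>2 A\<bar> + \<bar>measure \<nu>1 B - measure \<nu>2 B\<bar> \<le> d_var \<nu>1 \<nu>2"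
    using AB assms by (intro d_var_ge) auto
  ultimately show "\<bar>measure \<nu>0 A - measure \<nu>2 A\<bar> + \<bar>measure \<nu>0 B - measure \<nu>2 B\<bar>
      \<le> d_var \<nu>0 \<nu>1 + d_var \<nu>1 \<nu>2" by linarith
qed

section \<open>Integrals of continuous functions on the Stone space\<close>

fun step_fun :: "(real \<times> 'a::boolean_algebra) list \<Rightarrow> 'a set \<Rightarrow> real" where
  "step_fun [] y = 0"
| "step_fun ((t, b) # ps) y = t * indicator (stone_set b) y + step_fun ps y"

lemma integral_step_fun:
  fixes ps :: "(real \<times> 'a::boolean_algebra) list"
  assumes \<nu>: "\<nu> \<in> radon_probs stone_top"
  shows "integrable \<nu> (step_fun ps) \<and>
    (\<integral>y. step_fun ps y \<partial>\<nu>) = (\<Sum>(t, b)\<leftarrow>ps. t * measure \<nu> (stone_set b))"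
proof (induction ps)
  case (Cons p ps)
  obtain t b where p: "p = (t, b)" by fastforce
  have "stone_set b \<in> sets \<nu>" by (simp add: radon_probs_sets[OF \<nu>] stone_set_in_borel)
  moreover have "emeasure \<nu> (stone_set b) < \<infinity>"
    using finite_measure.emeasure_finite[OF prob_space.axioms(1)[OF radon_probs_prob_space[OF \<nu>]]]
    by (simp add: less_top)
  ultimately have "integrable \<nu> (\<lambda>y. t * indicator (stone_set b) y)"
    by (intro integrable_mult_right integrable_real_indicator)
  moreover have "stone_set b \<inter> space \<nu> = stone_set b"
    using stone_set_subset_St by (auto simp: radon_probs_space[OF \<nu>] topspace_stone_top)
  ultimately show ?case using Cons by (simp add: p)
qed simp

lemma step_fun_approx_on_finite_cover:
  fixes g :: "'a::boolean_algebra set \<Rightarrow> real"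
  assumes "finite T" "\<forall>a\<in>T. \<exists>t. \<forall>y\<in>stone_set a. \<bar>g y - t\<bar> \<le> \<delta>"
  shows "\<exists>ps. \<forall>y\<in>St. (y \<in> (\<Union>a\<in>T. stone_set a) \<longrightarrow> \<bar>g y - step_fun ps y\<bar> \<le> \<delta>) \<and>
                   (y \<notin> (\<Union>a\<in>T. stone_set a) \<longrightarrow> step_fun ps y = 0)"
  using assms
proof (induction T rule: finite_induct)
  case empty
  show ?case by (intro exI[of _ "[]"]) simp
next
  case (insert a T)
  then obtain ps where ps: "\<forall>y\<in>St. (y \<in> (\<Union>a\<in>T. stone_set a) \<longrightarrow> \<bar>g y - step_fun ps y\<bar> \<le> \<delta>) \<and>
                   (y \<notin> (\<Union>a\<in>T. stone_set a) \<longrightarrow> step_fun ps y = 0)" by blast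
  obtain t where t: "\<forall>y\<in>stone_set a. \<bar>g y - t\<bar> \<le> \<delta>" using insert.prems by blast
  obtain u where u: "stone_set u = (\<Union>a\<in>T. stone_set a)"
    using stone_set_Union_finite[OF insert.hyps(1)] by blast
  have ps': "\<forall>y\<in>St. (y \<in> stone_set u \<longrightarrow> \<bar>g y - step_fun ps y\<bar> \<le> \<delta>) \<and>
                   (y \<notin> stone_set u \<longrightarrow> step_fun ps y = 0)" using ps u by simp
  have U: "(\<Union>a\<in>insert a T. stone_set a) = stone_set a \<union> stone_set u" using u by simp
  show ?case
    unfolding U
  proof (intro exI[of _ "(t, a - u) # ps"] ballI)
    fix y :: "'a set" assume y: "y \<in> St"
    consider "y \<in> stone_set u" | "y \<notin> stone_set u" "y \<in> stone_set a"
      | "y \<notin> stone_set u" "y \<notin> stone_set a" by blast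
    then show "(y \<in> stone_set a \<union> stone_set u \<longrightarrow> \<bar>g y - step_fun ((t, a - u) # ps) y\<bar> \<le> \<delta>) \<and>
      (y \<notin> stone_set a \<union> stone_set u \<longrightarrow> step_fun ((t, a - u) # ps) y = 0)"
      using ps' t y by cases (simp_all add: stone_set_diff)
  qed
qed

lemma continuous_stone_step_approx:
  fixes g :: "'a::boolean_algebra set \<Rightarrow> real"
  assumes g: "continuous_map stone_top euclideanreal g" and "\<delta> > 0"
  shows "\<exists>ps::(real \<times> 'a) list. \<forall>y\<in>St. \<bar>g y - step_fun ps y\<bar> \<le> \<delta>"
proof -
  define P where "P = {a::'a. \<exists>t. \<forall>y\<in>stone_set a. \<bar>g y - t\<bar> \<le> \<delta>}"
  have "St \<subseteq> (\<Union>a\<in>P. stone_set a)"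
  proof
    fix x :: "'a set" assume "x \<in> St"
    let ?V = "{y \<in> topspace stone_top. g y \<in> ball (g x) \<delta>}"
    have "openin stone_top ?V"
      using openin_continuous_map_preimage[OF g open_openin[THEN iffD1, OF open_ball]] .
    moreover have "x \<in> ?V"
      using \<open>x \<in> St\<close> \<open>\<delta> > 0\<close> by (simp add: topspace_stone_top)
    ultimately obtain a where a: "x \<in> stone_set a" "stone_set a \<subseteq> ?V"
      using openin_stone_topD by blast
    have "\<bar>g y - g x\<bar> \<le> \<delta>" if "y \<in> stone_set a" for y
    proof -
      from a(2) that have "dist (g x) (g y) < \<delta>" by auto
      then show ?thesis by (simp add: dist_real_def abs_minus_commute)
    qed
    then have "a \<in> P" unfolding P_def by blast
    with a(1) show "x \<in> (\<Union>a\<in>P. stone_set a)" by blast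
  qed
  from stone_set_cover_finite_subcover[OF this]
  obtain T where T: "T \<subseteq> P" "finite T" "St \<subseteq> (\<Union>a\<in>T. stone_set a)" by blast
  from T(1) have "\<forall>a\<in>T. \<exists>t. \<forall>y\<in>stone_set a. \<bar>g y - t\<bar> \<le> \<delta>" unfolding P_def by blast
  from step_fun_approx_on_finite_cover[OF T(2) this] T(3) show ?thesis by blast
qed

lemma integrable_continuous_stone:
  assumes \<nu>: "\<nu> \<in> radon_probs stone_top" and g: "continuous_map stone_top euclideanreal g"
  shows "integrable \<nu> g"
proof -
  have "compactin euclideanreal (g ` topspace stone_top)"
    using image_compactin[OF _ g] compact_space_stone_top by (simp add: compact_space_def)
  then have "bounded (g ` St)" by (simp add: topspace_stone_top compact_imp_bounded)
  then obtain B where B: "\<forall>y\<in>St. \<bar>g y\<bar> \<le> B" by (auto simp: bounded_real)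
  have "g \<in> borel_measurable (borel_of stone_top)"
    using measurable_borel_of_continuous_map[OF g] by (simp add: borel_of_euclidean)
  then have "g \<in> borel_measurable \<nu>"
    by (simp add: measurable_cong_sets[OF radon_probs_sets[OF \<nu>] refl])
  with B show ?thesis
    using radon_probs_prob_space[OF \<nu>] radon_probs_space[OF \<nu>]
    by (intro finite_measure.integrable_const_bound[where B=B]) (auto simp: prob_space_def topspace_stone_top)
qed

lemma integral_step_fun_approx:
  assumes \<nu>: "\<nu> \<in> radon_probs stone_top" and g: "continuous_map stone_top euclideanreal g"
    and ps: "\<forall>y\<in>St. \<bar>g y - step_fun ps y\<bar> \<le> \<delta>"
  shows "\<bar>(\<integral>y. g y \<partial>\<nu>) - (\<Sum>(t, b)\<leftarrow>ps. t * measure \<nu> (stone_set b))\<bar> \<le> \<delta>"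
proof -
  note P = radon_probs_prob_space[OF \<nu>]
  note ints = integrable_continuous_stone[OF \<nu> g] integral_step_fun[OF \<nu>, of ps]
  have "(\<integral>y. g y - step_fun ps y \<partial>\<nu>) \<le> \<delta>" "(\<integral>y. step_fun ps y - g y \<partial>\<nu>) \<le> \<delta>"
    by (rule prob_space.integral_le_const[OF P]; use ps ints in
        \<open>auto intro!: AE_I2 simp: abs_le_iff radon_probs_space[OF \<nu>] topspace_stone_top\<close>)+
  with ints show ?thesis by (simp add: abs_le_iff)
qed

lemma abs_step_sum_diff_le:
  assumes "\<forall>b\<in>snd ` set ps. \<bar>measure \<nu>1 (stone_set b) - measure \<nu>2 (stone_set b)\<bar> \<le> \<eta>"
  shows "\<bar>(\<Sum>(t, b)\<leftarrow>ps. t * measure \<nu>1 (stone_set b)) - (\<Sum>(t, b)\<leftarrow>ps. t * measure \<nu>2 (stone_set b))\<bar>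
      \<le> (\<Sum>(t, b)\<leftarrow>ps. \<bar>t\<bar>) * \<eta>"
  using assms
proof (induction ps)
  case (Cons p ps)
  obtain t b where p: "p = (t, b)" by fastforce
  with Cons.prems have "\<bar>t * measure \<nu>1 (stone_set b) - t * measure \<nu>2 (stone_set b)\<bar> \<le> \<bar>t\<bar> * \<eta>"
    by (simp add: abs_mult mult_left_mono flip: right_diff_distrib)
  with Cons show ?case by (simp add: p distrib_right)
qed simp

text \<open>A uniform step-function approximation reduces the integrals of a continuous function to
  finitely many values on clopen sets.\<close>

lemma integral_continuous_stone_close:
  fixes g :: "'a::boolean_algebra set \<Rightarrow> real"
  assumes g: "continuous_map stone_top euclideanreal g" and "\<epsilon> > 0"
  shows "\<exists>B::'a set. \<exists>\<eta>>0. finite B \<and>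
           (\<forall>\<nu>1\<in>radon_probs stone_top. \<forall>\<nu>2\<in>radon_probs stone_top.
             (\<forall>b\<in>B. \<bar>measure \<nu>1 (stone_set b) - measure \<nu>2 (stone_set b)\<bar> \<le> \<eta>) \<longrightarrow>
             \<bar>(\<integral>y. g y \<partial>\<nu>1) - (\<integral>y. g y \<partial>\<nu>2)\<bar> \<le> \<epsilon>)"
proof -
  define \<delta> where "\<delta> = \<epsilon> / 3"
  then have "\<delta> > 0" using \<open>\<epsilon> > 0\<close> by simp
  then obtain ps :: "(real \<times> 'a) list" where ps: "\<forall>y\<in>St. \<bar>g y - step_fun ps y\<bar> \<le> \<delta>"
    using continuous_stone_step_approx[OF g] by blast
  define K where "K = (\<Sum>(t, b)\<leftarrow>ps. \<bar>t\<bar>)"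
  have "K \<ge> 0" unfolding K_def by (rule sum_list_nonneg) auto
  define \<eta> where "\<eta> = \<delta> / (K + 1)"
  have "\<eta> > 0" "K * \<eta> \<le> \<delta>"
    using \<open>\<delta> > 0\<close> \<open>K \<ge> 0\<close> by (simp_all add: \<eta>_def field_simps)
  show ?thesis
  proof (intro exI[of _ "snd ` set ps"] exI[of _ \<eta>] conjI ballI impI)
    fix \<nu>1 \<nu>2 :: "'a set measure"
    assume "\<nu>1 \<in> radon_probs stone_top" "\<nu>2 \<in> radon_probs stone_top"
      "\<forall>b\<in>snd ` set ps. \<bar>measure \<nu>1 (stone_set b) - measure \<nu>2 (stone_set b)\<bar> \<le> \<eta>"
    moreover have "\<epsilon> = 3 * \<delta>" by (simp add: \<delta>_def)
    ultimately show "\<bar>(\<integral>y. g y \<partial>\<nu>1) - (\<integral>y. g y \<partial>\<nu>2)\<bar> \<le> \<epsilon>"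
      using integral_step_fun_approx[OF _ g ps, of \<nu>1] integral_step_fun_approx[OF _ g ps, of \<nu>2]
        abs_step_sum_diff_le[of ps \<nu>1 \<nu>2 \<eta>] \<open>K * \<eta> \<le> \<delta>\<close>
      unfolding K_def by linarith
  qed (use \<open>\<eta> > 0\<close> in simp_all)
qed

locale metric_boolean_algebra =
  fixes \<mu> :: "'b::boolean_algebra \<Rightarrow> real"
  assumes metric_ba: "metric_ba \<mu>"
begin

lemma mu_nonneg: "0 \<le> \<mu> x"
  and mu_top: "\<mu> top = 1"
  and mu_additive: "inf x y = bot \<Longrightarrow> \<mu> (sup x y) = \<mu> x + \<mu> y"
  using metric_ba by (simp_all add: metric_ba_def)

lemma mu_bot: "\<mu> bot = 0"
  using mu_additive[of bot bot] by simp

lemma mu_split: "\<mu> x = \<mu> (inf x y) + \<mu> (x - y)"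
proof -
  have "sup (inf x y) (x - y) = x"
    by (simp add: diff_eq flip: inf_sup_distrib1)
  moreover have "inf (inf x y) (x - y) = bot"
    by (simp add: diff_eq inf_assoc inf_left_commute[of y])
  ultimately show ?thesis using mu_additive[of "inf x y" "x - y"] by simp
qed

lemma mu_mono: "x \<le> y \<Longrightarrow> \<mu> x \<le> \<mu> y"
  using mu_split[of y x] mu_nonneg[of "y - x"] by (simp add: inf_absorb2)

lemma mu_le_1: "\<mu> x \<le> 1"
  using mu_mono[of x top] mu_top by simp

lemma d_mu_eq: "d_mu \<mu> x y = \<mu> (x - y) + \<mu> (y - x)"
proof -
  have "inf (x - y) (y - x) = bot"
    by (simp add: diff_eq inf_assoc inf_left_commute[of "- y"] inf_left_commute[of x])
  then show ?thesis by (simp add: d_mu_def sdiff_ba_def mu_additive)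
qed

lemma abs_mu_diff_le_d_mu: "\<bar>\<mu> x - \<mu> y\<bar> \<le> d_mu \<mu> x y"
  using mu_split[of x y] mu_split[of y x] d_mu_eq[of x y] mu_nonneg[of "x - y"] mu_nonneg[of "y - x"]
  by (simp add: inf_commute)

lemma d_mu_le_1: "d_mu \<mu> x y \<le> 1"
  by (simp add: d_mu_def mu_le_1)

lemma d_mu_self: "d_mu \<mu> x x = 0"
  by (simp add: d_mu_def sdiff_ba_def diff_eq mu_bot)

subsection \<open>Extension of \<open>\<mu>\<close> to a Radon measure on the Stone space\<close>

definition open_content :: "'b set set \<Rightarrow> real" where
  "open_content W = (SUP b \<in> {b. stone_set b \<subseteq> W}. \<mu> b)"

definition outer_content :: "'b set set \<Rightarrow> real" where
  "outer_content E = (INF W \<in> {W. openin stone_top W \<and> E \<subseteq> W}. open_content W)"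

lemma open_content_ne: "{b. stone_set b \<subseteq> W} \<noteq> {}"
  using stone_set_bot by blast

lemma open_content_bdd: "bdd_above (\<mu> ` {b. stone_set b \<subseteq> W})"
  using mu_le_1 by (intro bdd_aboveI[of _ 1]) auto

lemma open_content_ge: "stone_set b \<subseteq> W \<Longrightarrow> \<mu> b \<le> open_content W"
  unfolding open_content_def by (rule cSUP_upper) (use open_content_bdd in auto)

lemma open_content_le: "(\<And>b. stone_set b \<subseteq> W \<Longrightarrow> \<mu> b \<le> c) \<Longrightarrow> open_content W \<le> c"
  unfolding open_content_def by (rule cSUP_least) (use open_content_ne in auto)

lemma open_content_nonneg: "0 \<le> open_content W"
  using open_content_ge[of bot W] mu_bot by (simp add: stone_set_bot)

lemma open_content_mono: "W \<subseteq> W' \<Longrightarrow> open_content W \<le> open_content W'"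
  by (rule open_content_le) (rule open_content_ge, blast)

lemma open_content_stone_set: "open_content (stone_set b) = \<mu> b"
proof (rule antisym)
  show "open_content (stone_set b) \<le> \<mu> b"
    by (rule open_content_le) (simp add: stone_set_subset_iff mu_mono)
qed (rule open_content_ge, simp)

lemma open_content_approx:
  assumes "e > 0"
  shows "\<exists>b. stone_set b \<subseteq> W \<and> open_content W - e < \<mu> b"
proof -
  from assms have "open_content W - e < (SUP b \<in> {b. stone_set b \<subseteq> W}. \<mu> b)"
    by (simp add: open_content_def)
  then show ?thesis unfolding less_cSUP_iff[OF open_content_ne open_content_bdd] by blast
qed

lemma open_content_diff_add:
  assumes "stone_set b \<subseteq> W"
  shows "open_content (W - stone_set b) + \<mu> b \<le> open_content W"
proof -
  have "open_content (W - stone_set b) \<le> open_content W - \<mu> b"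
  proof (rule open_content_le)
    fix c assume c: "stone_set c \<subseteq> W - stone_set b"
    then have "stone_set (inf c b) = {}" by (auto simp: stone_set_inf)
    then have "inf c b = bot" by (simp add: stone_set_eq_empty_iff)
    then have "\<mu> (sup c b) = \<mu> c + \<mu> b" by (rule mu_additive)
    moreover have "\<mu> (sup c b) \<le> open_content W"
      using c assms by (intro open_content_ge) (auto simp: stone_set_sup)
    ultimately show "\<mu> c \<le> open_content W - \<mu> b" by simp
  qed
  then show ?thesis by simp
qed

text \<open>A clopen set inside \<open>W1 \<union> W2\<close> splits into clopen parts inside \<open>W1\<close> and \<open>W2\<close>, since its
  compact part outside \<open>W2\<close> can be enlarged to a clopen set inside \<open>W1\<close>.\<close>

lemma open_content_Un:
  assumes "openin stone_top W1" "openin stone_top W2"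
  shows "open_content (W1 \<union> W2) \<le> open_content W1 + open_content W2"
proof (rule open_content_le)
  fix b assume b: "stone_set b \<subseteq> W1 \<union> W2"
  have "compactin stone_top (stone_set b - W2)"
    using closedin_diff[OF closedin_stone_set assms(2)]
    by (rule closedin_compact_space[OF compact_space_stone_top])
  with assms(1) b obtain c where c: "stone_set b - W2 \<subseteq> stone_set c" "stone_set c \<subseteq> W1"
    using stone_set_between[of "stone_set b - W2" W1] by blast
  have "\<mu> (inf b c) \<le> open_content W1"
    using c by (intro open_content_ge) (auto simp: stone_set_inf)
  moreover have "\<mu> (b - c) \<le> open_content W2"
    using c by (intro open_content_ge) (auto simp: stone_set_diff)
  ultimately show "\<mu> b \<le> open_content W1 + open_content W2"
    using mu_split[of b c] by simp
qed

lemma open_content_UN_lessThan: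
  fixes W :: "nat \<Rightarrow> 'b set set"
  assumes "\<And>i. i < n \<Longrightarrow> openin stone_top (W i)"
  shows "open_content (\<Union>i<n. W i) \<le> (\<Sum>i<n. open_content (W i))"
  using assms
proof (induction n)
  case 0
  show ?case by (auto intro: open_content_le simp: stone_set_eq_empty_iff mu_bot)
next
  case (Suc n)
  have "openin stone_top (\<Union>i<n. W i)" "openin stone_top (W n)"
    using Suc.prems by (auto intro: openin_Union)
  moreover have "(\<Union>i<Suc n. W i) = (\<Union>i<n. W i) \<union> W n" by (auto simp: lessThan_Suc)
  ultimately have "open_content (\<Union>i<Suc n. W i) \<le> open_content (\<Union>i<n. W i) + open_content (W n)"
    using open_content_Un by simp
  with Suc show ?case by simp
qed

lemma open_content_countable_subadditive:
  assumes "\<And>n. openin stone_top (W n)" "summable (\<lambda>n. open_content (W n))"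
  shows "open_content (\<Union>n. W n) \<le> (\<Sum>n. open_content (W n))"
proof (rule open_content_le)
  fix b assume b: "stone_set b \<subseteq> (\<Union>n. W n)"
  have "\<forall>U\<in>range W. openin stone_top U" using assms(1) by blast
  with b obtain \<F> where "finite \<F>" "\<F> \<subseteq> range W" "stone_set b \<subseteq> \<Union>\<F>"
    using compactin_stone_set[of b, unfolded compactin_def, THEN conjunct2, rule_format, of "range W"]
    by blast
  moreover from this obtain I where "finite I" "\<F> = W ` I"
    using finite_subset_image[of \<F> W UNIV] by blast
  moreover from \<open>finite I\<close> obtain n where "I \<subseteq> {..<n}"
    using finite_nat_bounded by blast
  ultimately have "stone_set b \<subseteq> (\<Union>i<n. W i)" by blast
  then have "\<mu> b \<le> open_content (\<Union>i<n. W i)" by (rule open_content_ge)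
  also have "\<dots> \<le> (\<Sum>i<n. open_content (W i))" using assms(1) by (rule open_content_UN_lessThan)
  also have "\<dots> \<le> (\<Sum>n. open_content (W n))"
    using assms(2) open_content_nonneg by (intro sum_le_suminf) auto
  finally show "\<mu> b \<le> (\<Sum>n. open_content (W n))" .
qed

lemma openin_St: "openin stone_top (St :: 'b set set)"
  using openin_topspace[of "stone_top :: 'b set topology"] by (simp add: topspace_stone_top)

lemma outer_content_ne: "(E :: 'b set set) \<subseteq> St \<Longrightarrow> {W. openin stone_top W \<and> E \<subseteq> W} \<noteq> {}"
  using openin_St by blast

lemma outer_content_bdd: "bdd_below (open_content ` {W. openin stone_top W \<and> E \<subseteq> W})"
  using open_content_nonneg by (intro bdd_belowI[of _ 0]) auto

lemma outer_content_le: "openin stone_top W \<Longrightarrow> E \<subseteq> W \<Longrightarrow> outer_content E \<le> open_content W"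
  unfolding outer_content_def by (rule cINF_lower) (use outer_content_bdd in auto)

lemma outer_content_ge:
  "E \<subseteq> St \<Longrightarrow> (\<And>W. openin stone_top W \<Longrightarrow> E \<subseteq> W \<Longrightarrow> c \<le> open_content W) \<Longrightarrow> c \<le> outer_content E"
  unfolding outer_content_def by (rule cINF_greatest) (use outer_content_ne in auto)

lemma outer_content_nonneg: "E \<subseteq> St \<Longrightarrow> 0 \<le> outer_content E"
  by (rule outer_content_ge) (auto simp: open_content_nonneg)

lemma outer_content_open: "openin stone_top W \<Longrightarrow> outer_content W = open_content W"
proof (rule antisym)
  assume W: "openin stone_top W"
  then show "outer_content W \<le> open_content W" by (rule outer_content_le) simp
  from W have "W \<subseteq> St" using openin_subset topspace_stone_top by blast
  then show "open_content W \<le> outer_content W" by (rule outer_content_ge) (rule open_content_mono)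
qed

lemma outer_content_mono:
  assumes "E \<subseteq> F" "F \<subseteq> St"
  shows "outer_content E \<le> outer_content F"
  using assms(2)
proof (rule outer_content_ge)
  fix W assume "openin stone_top W" "F \<subseteq> W"
  show "outer_content E \<le> open_content W"
    by (rule outer_content_le[OF \<open>openin stone_top W\<close>]) (use assms(1) \<open>F \<subseteq> W\<close> in blast)
qed

lemma outer_content_approx:
  assumes "E \<subseteq> St" "e > 0"
  shows "\<exists>W. openin stone_top W \<and> E \<subseteq> W \<and> open_content W < outer_content E + e"
proof -
  from assms(2) have "(INF W \<in> {W. openin stone_top W \<and> E \<subseteq> W}. open_content W) < outer_content E + e"
    by (simp add: outer_content_def)
  then show ?thesis
    unfolding cINF_less_iff[OF outer_content_ne[OF assms(1)] outer_content_bdd] by blast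
qed

lemma outer_content_empty: "outer_content {} = 0"
  using outer_content_open[of "stone_set bot"] open_content_stone_set[of bot] mu_bot
  by (simp add: stone_set_bot openin_stone_set)

lemma outer_content_Un:
  assumes "A \<subseteq> St" "B \<subseteq> St"
  shows "outer_content (A \<union> B) \<le> outer_content A + outer_content B"
proof (rule field_le_epsilon)
  fix e :: real assume "0 < e"
  then have e: "e / 2 > 0" by simp
  obtain WA where WA: "openin stone_top WA" "A \<subseteq> WA" "open_content WA < outer_content A + e / 2"
    using outer_content_approx[OF assms(1) e] by blast
  obtain WB where WB: "openin stone_top WB" "B \<subseteq> WB" "open_content WB < outer_content B + e / 2"
    using outer_content_approx[OF assms(2) e] by blast
  have "outer_content (A \<union> B) \<le> open_content (WA \<union> WB)"
    using WA WB by (intro outer_content_le) auto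
  also have "\<dots> \<le> open_content WA + open_content WB"
    using WA(1) WB(1) by (rule open_content_Un)
  finally show "outer_content (A \<union> B) \<le> outer_content A + outer_content B + e"
    using WA(3) WB(3) by simp
qed

lemma outer_content_countable_subadditive:
  assumes "\<And>n. E n \<subseteq> St" "summable (\<lambda>n. outer_content (E n))"
  shows "outer_content (\<Union>n. E n) \<le> (\<Sum>n. outer_content (E n))"
proof (rule field_le_epsilon)
  fix e :: real assume "0 < e"
  define d where "d n = e * (1 / 2) ^ Suc n" for n
  have d: "d sums e" unfolding d_def using sums_mult[OF power_half_series, of e] by simp
  have "\<forall>n. \<exists>W. openin stone_top W \<and> E n \<subseteq> W \<and> open_content W < outer_content (E n) + d n"
    using outer_content_approx[OF assms(1)] \<open>0 < e\<close> by (simp add: d_def)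
  from choice[OF this] obtain W where
    "\<forall>n. openin stone_top (W n) \<and> E n \<subseteq> W n \<and> open_content (W n) < outer_content (E n) + d n"
    by blast
  then have W: "\<And>n. openin stone_top (W n)" "\<And>n. E n \<subseteq> W n"
      "\<And>n. open_content (W n) < outer_content (E n) + d n"
    by simp_all
  have sum_Ed: "summable (\<lambda>n. outer_content (E n) + d n)"
    using assms(2) d by (intro summable_add) (auto simp: sums_iff)
  have sum_W: "summable (\<lambda>n. open_content (W n))"
    using W(3) open_content_nonneg
    by (intro summable_comparison_test'[OF sum_Ed, of 0]) (auto intro: less_imp_le)
  have "outer_content (\<Union>n. E n) \<le> open_content (\<Union>n. W n)"
    using W by (intro outer_content_le) auto
  also have "\<dots> \<le> (\<Sum>n. open_content (W n))"
    using W(1) sum_W by (rule open_content_countable_subadditive)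
  also have "\<dots> \<le> (\<Sum>n. outer_content (E n) + d n)"
    using W(3) sum_W sum_Ed by (intro suminf_le) (auto intro: less_imp_le)
  also have "\<dots> = (\<Sum>n. outer_content (E n)) + e"
    using suminf_add[OF assms(2), of d] d by (simp add: sums_iff)
  finally show "outer_content (\<Union>n. E n) \<le> (\<Sum>n. outer_content (E n)) + e" .
qed

text \<open>Open sets are Caratheodory measurable: cover \<open>X\<close> by an open \<open>G\<close> of nearly minimal content,
  and exhaust \<open>G \<inter> W\<close> from inside by a clopen set whose complement in \<open>G\<close> is open and contains
  \<open>X - W\<close>.\<close>

lemma outer_content_split_open:
  assumes W: "openin stone_top W" and X: "X \<subseteq> St"
  shows "outer_content (W \<inter> X) + outer_content ((St - W) \<inter> X) = outer_content X"
proof (rule antisym)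
  have "X = (W \<inter> X) \<union> ((St - W) \<inter> X)" using X by blast
  then show "outer_content X \<le> outer_content (W \<inter> X) + outer_content ((St - W) \<inter> X)"
    using outer_content_Un[of "W \<inter> X" "(St - W) \<inter> X"] X by auto
next
  show "outer_content (W \<inter> X) + outer_content ((St - W) \<inter> X) \<le> outer_content X"
  proof (rule field_le_epsilon)
    fix e :: real assume "0 < e"
    then have e: "e / 2 > 0" by simp
    obtain G where G: "openin stone_top G" "X \<subseteq> G" "open_content G < outer_content X + e / 2"
      using outer_content_approx[OF X e] by blast
    obtain b where b: "stone_set b \<subseteq> G \<inter> W" "open_content (G \<inter> W) - e / 2 < \<mu> b"
      using open_content_approx[OF e] by blast
    have "G \<subseteq> St" using G(1) openin_subset topspace_stone_top by blast
    then have "G - stone_set b = G \<inter> stone_set (- b)" by (auto simp: stone_set_compl)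
    then have "openin stone_top (G - stone_set b)" by (simp add: openin_Int G(1) openin_stone_set)
    then have "outer_content ((St - W) \<inter> X) \<le> open_content (G - stone_set b)"
      using G(2) b(1) by (intro outer_content_le) auto
    moreover have "outer_content (W \<inter> X) \<le> open_content (G \<inter> W)"
      using G W by (intro outer_content_le) auto
    moreover have "open_content (G - stone_set b) + \<mu> b \<le> open_content G"
      using b(1) by (intro open_content_diff_add) auto
    ultimately show "outer_content (W \<inter> X) + outer_content ((St - W) \<inter> X) \<le> outer_content X + e"
      using G(3) b(2) by linarith
  qed
qed

lemma outer_measure_space_outer_content:
  "outer_measure_space (Pow St) (\<lambda>E. ennreal (outer_content E))"
  unfolding outer_measure_space_def
proof (intro conjI)
  show "positive (Pow St) (\<lambda>E. ennreal (outer_content E))"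
    by (simp add: positive_def outer_content_empty)
  show "increasing (Pow St) (\<lambda>E. ennreal (outer_content E))"
    by (auto simp: increasing_def intro!: ennreal_leI outer_content_mono)
  show "countably_subadditive (Pow St) (\<lambda>E. ennreal (outer_content E))"
    unfolding countably_subadditive_def
  proof (intro allI impI)
    fix A :: "nat \<Rightarrow> 'b set set" assume "range A \<subseteq> Pow St"
    then have A: "\<And>n. A n \<subseteq> St" by blast
    show "ennreal (outer_content (\<Union>n. A n)) \<le> (\<Sum>n. ennreal (outer_content (A n)))"
    proof (cases "summable (\<lambda>n. outer_content (A n))")
      case True
      then have "ennreal (outer_content (\<Union>n. A n)) \<le> ennreal (\<Sum>n. outer_content (A n))"
        using A by (intro ennreal_leI outer_content_countable_subadditive)
      also have "\<dots> = (\<Sum>n. ennreal (outer_content (A n)))"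
        using True A outer_content_nonneg by (intro suminf_ennreal2[symmetric]) auto
      finally show ?thesis .
    next
      case False
      then have "(\<Sum>n. ennreal (outer_content (A n))) = top"
        using summable_suminf_not_top[of "\<lambda>n. outer_content (A n)"] A outer_content_nonneg by blast
      then show ?thesis by simp
    qed
  qed
qed

lemma openin_lambda_system:
  assumes "openin stone_top W"
  shows "W \<in> lambda_system St (Pow St) (\<lambda>E. ennreal (outer_content E))"
  unfolding lambda_system_def
proof (intro CollectI conjI ballI)
  show "W \<in> Pow St" using assms openin_subset topspace_stone_top by blast
  fix X :: "'b set set" assume "X \<in> Pow St"
  then have X: "X \<subseteq> St" by simp
  then have "outer_content (W \<inter> X) + outer_content ((St - W) \<inter> X) = outer_content X"
    and "0 \<le> outer_content (W \<inter> X)" "0 \<le> outer_content ((St - W) \<inter> X)"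
    using outer_content_split_open[OF assms X] outer_content_nonneg[of "W \<inter> X"]
      outer_content_nonneg[of "(St - W) \<inter> X"] by auto
  then show "ennreal (outer_content (W \<inter> X)) + ennreal (outer_content ((St - W) \<inter> X))
      = ennreal (outer_content X)"
    by (simp flip: ennreal_plus)
qed

lemma measure_space_outer_content:
  "measure_space St (sigma_sets St {W. openin stone_top W}) (\<lambda>E. ennreal (outer_content E))"
proof -
  let ?L = "lambda_system St (Pow St) (\<lambda>E. ennreal (outer_content E))"
  have ms: "measure_space St ?L (\<lambda>E. ennreal (outer_content E))"
    by (rule sigma_algebra.caratheodory_lemma[OF sigma_algebra_Pow outer_measure_space_outer_content])
  then have "sigma_algebra St ?L" by (simp add: measure_space_def)
  then have "sigma_sets St {W. openin stone_top W} \<subseteq> ?L"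
    using openin_lambda_system by (intro sigma_algebra.sigma_sets_subset) auto
  moreover have "sigma_algebra St (sigma_sets St {W. openin stone_top W})"
    using openin_subset topspace_stone_top by (intro sigma_algebra_sigma_sets) blast
  ultimately show ?thesis by (intro measure_down[OF ms])
qed

definition outer_content_measure :: "'b set measure" where
  "outer_content_measure = measure_of St {W. openin stone_top W} (\<lambda>E. ennreal (outer_content E))"

lemma sets_outer_content_measure: "sets outer_content_measure = sets (borel_of stone_top)"
  and space_outer_content_measure: "space outer_content_measure = St"
  using openin_subset[of stone_top] unfolding outer_content_measure_def
  by (auto simp: sets_measure_of_conv space_measure_of_conv sets_borel_of topspace_stone_top)

lemma emeasure_outer_content_measure:
  "E \<in> sets outer_content_measure \<Longrightarrow> emeasure outer_content_measure E = ennreal (outer_content E)"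
  using measure_space_outer_content openin_subset[of stone_top]
  by (intro emeasure_measure_of[OF outer_content_measure_def])
    (auto simp: measure_space_def topspace_stone_top sets_outer_content_measure sets_borel_of)

lemma measure_outer_content_measure:
  assumes "E \<in> sets outer_content_measure"
  shows "measure outer_content_measure E = outer_content E"
proof -
  have "E \<subseteq> St" using sets.sets_into_space[OF assms] by (simp add: space_outer_content_measure)
  with assms show ?thesis
    by (simp add: measure_def emeasure_outer_content_measure outer_content_nonneg)
qed

lemma measure_outer_content_measure_open:
  "openin stone_top W \<Longrightarrow> measure outer_content_measure W = open_content W"
  by (simp add: measure_outer_content_measure sets_outer_content_measure borel_of_open
      outer_content_open)

lemma prob_space_outer_content_measure: "prob_space outer_content_measure"
proof
  have "St \<in> sets outer_content_measure"
    using sets_outer_content_measure borel_of_open[OF openin_St] by simp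
  then show "emeasure outer_content_measure (space outer_content_measure) = 1"
    using outer_content_open[OF openin_St] open_content_stone_set[of top]
    by (simp add: space_outer_content_measure emeasure_outer_content_measure stone_set_top mu_top)
qed

lemma measure_outer_content_measure_stone_set:
  "measure outer_content_measure (stone_set b) = \<mu> b"
  by (simp add: measure_outer_content_measure_open openin_stone_set open_content_stone_set)

text \<open>Inner regularity: approximate the complement of \<open>E\<close> from outside by an open set.\<close>

lemma outer_content_measure_radon: "outer_content_measure \<in> radon_probs stone_top"
proof (rule radon_probsI)
  show "sets outer_content_measure = sets (borel_of stone_top)" "prob_space outer_content_measure"
    "space outer_content_measure = topspace stone_top"
    by (simp_all add: sets_outer_content_measure space_outer_content_measure
        prob_space_outer_content_measure topspace_stone_top)
  note P = prob_space_outer_content_measure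
  fix E e assume E: "E \<in> sets outer_content_measure" and "(e::real) > 0"
  then have compl: "St - E \<in> sets outer_content_measure"
    using sets.compl_sets[OF E] by (simp add: space_outer_content_measure)
  then obtain W where W: "openin stone_top W" "St - E \<subseteq> W" "open_content W < outer_content (St - E) + e"
    using outer_content_approx[OF _ \<open>e > 0\<close>, of "St - E"] by blast
  have "W \<subseteq> St" using W(1) openin_subset topspace_stone_top by blast
  then have "closedin stone_top (St - W)"
    using W(1) by (simp add: closedin_def topspace_stone_top double_diff)
  then have C: "compactin stone_top (St - W)"
    by (rule closedin_compact_space[OF compact_space_stone_top])
  have WB: "W \<in> sets outer_content_measure"
    by (simp add: sets_outer_content_measure borel_of_open[OF W(1)])
  have "measure outer_content_measure E - e = 1 - measure outer_content_measure (St - E) - e"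
    using prob_space.prob_compl[OF P E] by (simp add: space_outer_content_measure)
  also have "\<dots> \<le> 1 - measure outer_content_measure W"
    using W(3) measure_outer_content_measure[OF compl] measure_outer_content_measure_open[OF W(1)]
    by simp
  also have "\<dots> = measure outer_content_measure (St - W)"
    using prob_space.prob_compl[OF P WB] by (simp add: space_outer_content_measure)
  finally show "\<exists>C. compactin stone_top C \<and> C \<subseteq> E \<and>
      measure outer_content_measure E - e \<le> measure outer_content_measure C"
    using C W(2) by blast
qed

lemma mu_hat_radon: "mu_hat \<mu> \<in> radon_probs stone_top"
  and measure_mu_hat_stone_set: "measure (mu_hat \<mu>) (stone_set b) = \<mu> b"
proof -
  have "\<exists>!\<nu>. \<nu> \<in> radon_probs stone_top \<and> (\<forall>b. measure \<nu> (stone_set b) = \<mu> b)"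
    using outer_content_measure_radon measure_outer_content_measure_stone_set
    by (intro ex1I[of _ outer_content_measure]) (auto intro: stone_radon_eqI)
  then have "mu_hat \<mu> \<in> radon_probs stone_top \<and> (\<forall>b. measure (mu_hat \<mu>) (stone_set b) = \<mu> b)"
    unfolding mu_hat_def by (rule theI')
  then show "mu_hat \<mu> \<in> radon_probs stone_top" "measure (mu_hat \<mu>) (stone_set b) = \<mu> b"
    by simp_all
qed

context
  fixes \<phi> :: "'a::boolean_algebra \<Rightarrow> 'b"
  assumes \<phi>: "bool_hom \<phi>"
begin

lemma F_mu_radon: "F_mu \<mu> \<phi> \<in> radon_probs stone_top"
  unfolding F_mu_def
  by (rule radon_probs_distr[OF mu_hat_radon continuous_map_f_hom[OF \<phi>] Hausdorff_space_stone_top])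

lemma measure_F_mu_stone_set: "measure (F_mu \<mu> \<phi>) (stone_set a) = \<mu> (\<phi> a)"
proof -
  have "f_hom \<phi> \<in> mu_hat \<mu> \<rightarrow>\<^sub>M borel_of stone_top"
    using measurable_borel_of_continuous_map[OF continuous_map_f_hom[OF \<phi>]]
    by (simp add: measurable_cong_sets[OF radon_probs_sets[OF mu_hat_radon] refl])
  then show ?thesis
    by (simp add: F_mu_def measure_distr stone_set_in_borel radon_probs_space[OF mu_hat_radon]
        topspace_stone_top f_hom_preimage_stone_set[OF \<phi>] measure_mu_hat_stone_set)
qed

end

lemma abs_measure_F_mu_diff_le:
  assumes "bool_hom \<phi>" "bool_hom \<psi>"
  shows "\<bar>measure (F_mu \<mu> \<phi>) (stone_set a) - measure (F_mu \<mu> \<psi>) (stone_set a)\<bar> \<le> d_mu \<mu> (\<phi> a) (\<psi> a)"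
  using abs_mu_diff_le_d_mu by (simp add: measure_F_mu_stone_set assms)

subsection \<open>Continuity for the uniform and the norm topology\<close>

lemma d_mu_le_d_hom: "d_mu \<mu> (\<phi> a) (\<psi> a) \<le> d_hom \<mu> \<phi> \<psi>"
  unfolding d_hom_def by (rule cSUP_upper) (auto intro: bdd_aboveI[of _ 1] d_mu_le_1)

lemma d_hom_self: "d_hom \<mu> \<phi> \<phi> = 0"
  by (simp add: d_hom_def d_mu_self)

lemma d_var_F_mu_le:
  assumes "bool_hom \<phi>" "bool_hom \<psi>"
  shows "d_var (F_mu \<mu> \<phi>) (F_mu \<mu> \<psi>) \<le> 2 * d_hom \<mu> \<phi> \<psi>"
proof (rule d_var_le)
  have "\<bar>measure (F_mu \<mu> \<phi>) (stone_set a) - measure (F_mu \<mu> \<psi>) (stone_set a)\<bar> \<le> d_hom \<mu> \<phi> \<psi>" for a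
    using abs_measure_F_mu_diff_le[OF assms] d_mu_le_d_hom order_trans by blast
  note diff = stone_radon_measure_diff_le[OF F_mu_radon[OF assms(1)] F_mu_radon[OF assms(2)] this]
  fix A B assume "A \<in> sets (F_mu \<mu> \<phi>)" "B \<in> sets (F_mu \<mu> \<phi>)"
  then show "\<bar>measure (F_mu \<mu> \<phi>) A - measure (F_mu \<mu> \<psi>) A\<bar> + \<bar>measure (F_mu \<mu> \<phi>) B - measure (F_mu \<mu> \<psi>) B\<bar>
      \<le> 2 * d_hom \<mu> \<phi> \<psi>"
    using diff[of A] diff[of B] by (simp add: radon_probs_sets[OF F_mu_radon[OF assms(1)]])
qed

lemma topspace_uniform_top: "topspace (uniform_top \<mu> :: ('a::boolean_algebra \<Rightarrow> 'b) topology) = homs"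
  unfolding uniform_top_def topology_generated_by_topspace
proof (intro antisym subsetI)
  fix \<phi> :: "'a \<Rightarrow> 'b" assume "\<phi> \<in> homs"
  then have "{\<psi> \<in> homs. d_hom \<mu> \<phi> \<psi> < 1} \<in> {{\<psi> \<in> homs. d_hom \<mu> \<phi>' \<psi> < r} | \<phi>' r. \<phi>' \<in> homs \<and> r > 0}"
    by (intro CollectI exI[of _ \<phi>] exI[of _ "1::real"]) simp
  moreover have "\<phi> \<in> {\<psi> \<in> homs. d_hom \<mu> \<phi> \<psi> < 1}" using \<open>\<phi> \<in> homs\<close> by (simp add: d_hom_self)
  ultimately show "\<phi> \<in> \<Union> {{\<psi> \<in> homs. d_hom \<mu> \<phi>' \<psi> < r} | \<phi>' r. \<phi>' \<in> homs \<and> r > 0}"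
    by (rule UnionI)
qed auto

lemma continuous_map_F_mu_uniform:
  "continuous_map (uniform_top \<mu> :: ('a::boolean_algebra \<Rightarrow> 'b) topology)
     (norm_top (stone_top :: 'a set topology)) (F_mu \<mu>)"
  unfolding norm_top_def
proof (rule continuous_map_generated_by_locally)
  show "F_mu \<mu> ` topspace (uniform_top \<mu>) \<subseteq> \<Union> {{\<nu> \<in> radon_probs stone_top. d_var \<nu>0 \<nu> < r} | \<nu>0 r.
    \<nu>0 \<in> radon_probs (stone_top :: 'a set topology) \<and> r > 0}"
    using topspace_norm_top[of "stone_top :: 'a set topology", unfolded norm_top_def]
    by (auto simp: topspace_uniform_top homs_def F_mu_radon)
  fix V and \<phi> :: "'a \<Rightarrow> 'b"
  assume "V \<in> {{\<nu> \<in> radon_probs stone_top. d_var \<nu>0 \<nu> < r} | \<nu>0 r.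
      \<nu>0 \<in> radon_probs (stone_top :: 'a set topology) \<and> r > 0}"
    and "\<phi> \<in> topspace (uniform_top \<mu>)" "F_mu \<mu> \<phi> \<in> V"
  then obtain \<nu>0 r where V: "V = {\<nu> \<in> radon_probs stone_top. d_var \<nu>0 \<nu> < r}"
    and \<nu>0: "\<nu>0 \<in> radon_probs stone_top" and \<phi>: "bool_hom \<phi>" and "d_var \<nu>0 (F_mu \<mu> \<phi>) < r"
    by (auto simp: topspace_uniform_top homs_def)
  define \<delta> where "\<delta> = (r - d_var \<nu>0 (F_mu \<mu> \<phi>)) / 2"
  then have "\<delta> > 0" using \<open>d_var \<nu>0 (F_mu \<mu> \<phi>) < r\<close> by simp
  show "\<exists>T. openin (uniform_top \<mu>) T \<and> \<phi> \<in> T \<and> (\<forall>\<psi>\<in>T. F_mu \<mu> \<psi> \<in> V)"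
  proof (intro exI[of _ "{\<psi> \<in> homs. d_hom \<mu> \<phi> \<psi> < \<delta>}"] conjI ballI)
    show "openin (uniform_top \<mu>) {\<psi> \<in> homs. d_hom \<mu> \<phi> \<psi> < \<delta>}"
      unfolding uniform_top_def using \<phi> \<open>\<delta> > 0\<close>
      by (intro topology_generated_by_Basis CollectI exI[of _ \<phi>] exI[of _ \<delta>]) (simp add: homs_def)
    show "\<phi> \<in> {\<psi> \<in> homs. d_hom \<mu> \<phi> \<psi> < \<delta>}" using \<phi> \<open>\<delta> > 0\<close> by (simp add: homs_def d_hom_self)
    fix \<psi> assume "\<psi> \<in> {\<psi> \<in> homs. d_hom \<mu> \<phi> \<psi> < \<delta>}"
    then have \<psi>: "bool_hom \<psi>" and "d_hom \<mu> \<phi> \<psi> < \<delta>" by (auto simp: homs_def)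
    note R = \<nu>0 F_mu_radon[OF \<phi>] F_mu_radon[OF \<psi>]
    have "d_var \<nu>0 (F_mu \<mu> \<psi>) \<le> d_var \<nu>0 (F_mu \<mu> \<phi>) + d_var (F_mu \<mu> \<phi>) (F_mu \<mu> \<psi>)"
      by (rule d_var_triangle) (simp_all add: R[THEN radon_probs_prob_space] R[THEN radon_probs_sets])
    also have "\<dots> < r"
      using d_var_F_mu_le[OF \<phi> \<psi>] \<open>d_hom \<mu> \<phi> \<psi> < \<delta>\<close> by (simp add: \<delta>_def)
    finally show "F_mu \<mu> \<psi> \<in> V" using R(3) by (simp add: V)
  qed
qed

subsection \<open>Continuity for the pointwise and the weak* topology\<close>

lemma pointwise_subbase_mem:
  "\<phi> \<in> homs \<Longrightarrow> \<epsilon> > 0 \<Longrightarrow> {\<psi> \<in> homs. d_mu \<mu> (\<phi> a) (\<psi> a) < \<epsilon>} \<in>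
     {{\<psi> \<in> homs. d_mu \<mu> (\<phi>' a') (\<psi> a') < \<epsilon>'} | \<phi>' a' \<epsilon>'. \<phi>' \<in> homs \<and> \<epsilon>' > 0}"
  unfolding mem_Collect_eq by (intro exI[of _ \<phi>] exI[of _ a] exI[of _ \<epsilon>] conjI) simp_all

lemma topspace_pointwise_top: "topspace (pointwise_top \<mu> :: ('a::boolean_algebra \<Rightarrow> 'b) topology) = homs"
  unfolding pointwise_top_def topology_generated_by_topspace
proof (intro antisym subsetI)
  fix \<phi> :: "'a \<Rightarrow> 'b" assume "\<phi> \<in> homs"
  then have "\<phi> \<in> {\<psi> \<in> homs. d_mu \<mu> (\<phi> top) (\<psi> top) < 1}" by (simp add: d_mu_self)
  then show "\<phi> \<in> \<Union> {{\<psi> \<in> homs. d_mu \<mu> (\<phi>' a) (\<psi> a) < \<epsilon>} | \<phi>' a \<epsilon>. \<phi>' \<in> homs \<and> \<epsilon> > 0}"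
    by (rule UnionI[OF pointwise_subbase_mem[OF \<open>\<phi> \<in> homs\<close> zero_less_one]])
qed auto

lemma openin_pointwise_top_finite:
  fixes \<phi> :: "'a::boolean_algebra \<Rightarrow> 'b"
  assumes "\<phi> \<in> homs" "\<eta> > 0" "finite B"
  shows "openin (pointwise_top \<mu>) {\<psi> \<in> homs. \<forall>b\<in>B. d_mu \<mu> (\<phi> b) (\<psi> b) < \<eta>}"
proof -
  have "openin (pointwise_top \<mu>) {\<psi> \<in> homs. d_mu \<mu> (\<phi> b) (\<psi> b) < \<eta>}" for b
    unfolding pointwise_top_def using assms(1,2)
    by (intro topology_generated_by_Basis pointwise_subbase_mem)
  then have "openin (pointwise_top \<mu>)
      ((\<Inter>b\<in>B. {\<psi> \<in> homs. d_mu \<mu> (\<phi> b) (\<psi> b) < \<eta>}) \<inter> topspace (pointwise_top \<mu>))"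
    using assms(3) by blast
  moreover have "(\<Inter>b\<in>B. {\<psi> \<in> homs. d_mu \<mu> (\<phi> b) (\<psi> b) < \<eta>}) \<inter> topspace (pointwise_top \<mu>)
      = {\<psi> \<in> homs. \<forall>b\<in>B. d_mu \<mu> (\<phi> b) (\<psi> b) < \<eta>}"
    by (auto simp: topspace_pointwise_top)
  ultimately show ?thesis by simp
qed

lemma integral_F_mu_close:
  assumes f: "continuous_map (stone_top :: 'a::boolean_algebra set topology) euclideanreal f"
    and "\<delta> > 0"
  shows "\<exists>B::'a set. \<exists>\<eta>>0. finite B \<and> (\<forall>\<phi> \<psi>. bool_hom \<phi> \<longrightarrow> bool_hom \<psi> \<longrightarrow>
           (\<forall>b\<in>B. d_mu \<mu> (\<phi> b) (\<psi> b) < \<eta>) \<longrightarrow>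
           \<bar>(\<integral>y. f y \<partial>F_mu \<mu> \<phi>) - (\<integral>y. f y \<partial>F_mu \<mu> \<psi>)\<bar> \<le> \<delta>)"
proof -
  obtain B :: "'a set" and \<eta> where "\<eta> > 0" "finite B" and close: "\<And>\<nu>1 \<nu>2.
      \<nu>1 \<in> radon_probs stone_top \<Longrightarrow> \<nu>2 \<in> radon_probs stone_top \<Longrightarrow>
      \<forall>b\<in>B. \<bar>measure \<nu>1 (stone_set b) - measure \<nu>2 (stone_set b)\<bar> \<le> \<eta> \<Longrightarrow>
      \<bar>(\<integral>y. f y \<partial>\<nu>1) - (\<integral>y. f y \<partial>\<nu>2)\<bar> \<le> \<delta>"
    using integral_continuous_stone_close[OF f \<open>\<delta> > 0\<close>] by meson
  have "\<bar>(\<integral>y. f y \<partial>F_mu \<mu> \<phi>) - (\<integral>y. f y \<partial>F_mu \<mu> \<psi>)\<bar> \<le> \<delta>"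
    if \<phi>: "bool_hom \<phi>" and \<psi>: "bool_hom \<psi>" and "\<forall>b\<in>B. d_mu \<mu> (\<phi> b) (\<psi> b) < \<eta>"
    for \<phi> \<psi> :: "'a \<Rightarrow> 'b"
  proof (rule close[OF F_mu_radon[OF \<phi>] F_mu_radon[OF \<psi>]])
    show "\<forall>b\<in>B. \<bar>measure (F_mu \<mu> \<phi>) (stone_set b) - measure (F_mu \<mu> \<psi>) (stone_set b)\<bar> \<le> \<eta>"
      using that(3) abs_measure_F_mu_diff_le[OF \<phi> \<psi>] by (meson less_imp_le order_trans)
  qed
  with \<open>\<eta> > 0\<close> \<open>finite B\<close> show ?thesis by blast
qed

lemma continuous_map_F_mu_pointwise:
  "continuous_map (pointwise_top \<mu> :: ('a::boolean_algebra \<Rightarrow> 'b) topology)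
     (weak_star_top (stone_top :: 'a set topology)) (F_mu \<mu>)"
  unfolding weak_star_top_def
proof (rule continuous_map_generated_by_locally)
  show "F_mu \<mu> ` topspace (pointwise_top \<mu>) \<subseteq> \<Union> {{\<nu> \<in> radon_probs stone_top. \<bar>(\<integral>x. f x \<partial>\<nu>) - c\<bar> < \<epsilon>} |
    f c \<epsilon>. continuous_map (stone_top :: 'a set topology) euclideanreal f \<and> \<epsilon> > 0}"
    using topspace_weak_star_top[of "stone_top :: 'a set topology", unfolded weak_star_top_def]
    by (auto simp: topspace_pointwise_top homs_def F_mu_radon)
  fix V and \<phi> :: "'a \<Rightarrow> 'b"
  assume "V \<in> {{\<nu> \<in> radon_probs stone_top. \<bar>(\<integral>x. f x \<partial>\<nu>) - c\<bar> < \<epsilon>} | f c \<epsilon>.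
      continuous_map (stone_top :: 'a set topology) euclideanreal f \<and> \<epsilon> > 0}"
    and "\<phi> \<in> topspace (pointwise_top \<mu>)" "F_mu \<mu> \<phi> \<in> V"
  then obtain f c \<epsilon> where V: "V = {\<nu> \<in> radon_probs stone_top. \<bar>(\<integral>x. f x \<partial>\<nu>) - c\<bar> < \<epsilon>}"
    and f: "continuous_map (stone_top :: 'a set topology) euclideanreal f"
    and \<phi>: "bool_hom \<phi>" and "\<bar>(\<integral>x. f x \<partial>F_mu \<mu> \<phi>) - c\<bar> < \<epsilon>"
    by (auto simp: topspace_pointwise_top homs_def)
  define \<delta> where "\<delta> = (\<epsilon> - \<bar>(\<integral>x. f x \<partial>F_mu \<mu> \<phi>) - c\<bar>) / 2"
  then have "\<delta> > 0" using \<open>\<bar>(\<integral>x. f x \<partial>F_mu \<mu> \<phi>) - c\<bar> < \<epsilon>\<close> by simp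
  then obtain B \<eta> where "\<eta> > 0" "finite B" and close: "\<And>\<psi>. bool_hom \<psi> \<Longrightarrow>
      \<forall>b\<in>B. d_mu \<mu> (\<phi> b) (\<psi> b) < \<eta> \<Longrightarrow>
      \<bar>(\<integral>y. f y \<partial>F_mu \<mu> \<phi>) - (\<integral>y. f y \<partial>F_mu \<mu> \<psi>)\<bar> \<le> \<delta>"
    using integral_F_mu_close[OF f] \<phi> by meson
  show "\<exists>T. openin (pointwise_top \<mu>) T \<and> \<phi> \<in> T \<and> (\<forall>\<psi>\<in>T. F_mu \<mu> \<psi> \<in> V)"
  proof (intro exI[of _ "{\<psi> \<in> homs. \<forall>b\<in>B. d_mu \<mu> (\<phi> b) (\<psi> b) < \<eta>}"] conjI ballI)
    show "openin (pointwise_top \<mu>) {\<psi> \<in> homs. \<forall>b\<in>B. d_mu \<mu> (\<phi> b) (\<psi> b) < \<eta>}"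
      using \<phi> \<open>\<eta> > 0\<close> \<open>finite B\<close> by (intro openin_pointwise_top_finite) (simp_all add: homs_def)
    show "\<phi> \<in> {\<psi> \<in> homs. \<forall>b\<in>B. d_mu \<mu> (\<phi> b) (\<psi> b) < \<eta>}"
      using \<phi> \<open>\<eta> > 0\<close> by (simp add: homs_def d_mu_self)
    fix \<psi> assume "\<psi> \<in> {\<psi> \<in> homs. \<forall>b\<in>B. d_mu \<mu> (\<phi> b) (\<psi> b) < \<eta>}"
    then have \<psi>: "bool_hom \<psi>" and "\<forall>b\<in>B. d_mu \<mu> (\<phi> b) (\<psi> b) < \<eta>" by (auto simp: homs_def)
    then have "\<bar>(\<integral>y. f y \<partial>F_mu \<mu> \<phi>) - (\<integral>y. f y \<partial>F_mu \<mu> \<psi>)\<bar> \<le> \<delta>" by (rule close)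
    moreover have "\<bar>(\<integral>x. f x \<partial>F_mu \<mu> \<psi>) - c\<bar>
        \<le> \<bar>(\<integral>x. f x \<partial>F_mu \<mu> \<phi>) - c\<bar> + \<bar>(\<integral>y. f y \<partial>F_mu \<mu> \<phi>) - (\<integral>y. f y \<partial>F_mu \<mu> \<psi>)\<bar>"
      by linarith
    moreover have "\<bar>(\<integral>x. f x \<partial>F_mu \<mu> \<phi>) - c\<bar> = \<epsilon> - 2 * \<delta>"
      unfolding \<delta>_def by (simp add: field_simps)
    ultimately have "\<bar>(\<integral>x. f x \<partial>F_mu \<mu> \<psi>) - c\<bar> < \<epsilon>" using \<open>\<delta> > 0\<close> by linarith
    then show "F_mu \<mu> \<psi> \<in> V" using F_mu_radon[OF \<psi>] by (simp add: V)
  qed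
qed

end

theorem proposition5p1:
  fixes \<mu> :: "'b::boolean_algebra \<Rightarrow> real"
  assumes "metric_ba \<mu>"
  shows "continuous_map (uniform_top \<mu> :: ('a::boolean_algebra \<Rightarrow> 'b) topology)
           (norm_top (stone_top :: 'a set topology)) (F_mu \<mu>) \<and>
         continuous_map (pointwise_top \<mu> :: ('a::boolean_algebra \<Rightarrow> 'b) topology)
           (weak_star_top (stone_top :: 'a set topology)) (F_mu \<mu>)"
proof -
  interpret metric_boolean_algebra \<mu> using assms by unfold_locales
  show ?thesis using continuous_map_F_mu_uniform continuous_map_F_mu_pointwise by blast
qed

end
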